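(* For each $d$, let $X_0,X_1,\dots,X_n$ be i.i.d. $N(0,I_d)$, let $\varepsilon\sim N(0,I_d)$ be independent of them, let $Y_0=X_0+\varepsilon=(y_{01},\dots,y_{0d})^T$, and let $w_i=\exp(-\|Y_0-X_i\|^2/2)/\sum_{j=1}^n\exp(-\|Y_0-X_j\|^2/2)$. Conditionally on $Y_0,X_1,\dots,X_n$, let $X_1^*,\dots,X_n^*$ be an i.i.d. sample from the weighted empirical measure $\sum_{j=1}^n w_j\delta_{X_j}$. Fix $k$ and let $(x^*_{j1},\dots,x^*_{jk})$ denote the first $k$ coordinates of $X_j^*$. Then, as $\log n/d\to\infty$, the empirical distribution $\frac1n\sum_{j=1}^n\delta_{(x^*_{j1},\dots,x^*_{jk})}$ converges in law (weakly, in probability) to $N\!\left(\tfrac12(y_{01},\dots,y_{0k})^T,\ \tfrac12 I_k\right)$.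
   Context: $\delta_x$ denotes the point mass at $x$; $\|\cdot\|$ is the Euclidean norm. *)

theory Defs
  imports "HOL-Probability.Probability"
begin

text \<open>Standard normal distribution on the real line, and the standard Gaussian
  N(0, I_d) on R^d, vectors in R^d being represented as functions nat => real
  with coordinates 0..d-1 (extensional product measure).\<close>

definition std_gauss :: "real measure" where
  "std_gauss = density lborel std_normal_density"

definition gauss_vec :: "nat \<Rightarrow> (nat \<Rightarrow> real) measure" where
  "gauss_vec d = PiM {..<d} (\<lambda>_. std_gauss)"

text \<open>The data (X_0, X_1, ..., X_n, eps): component 0 is X_0, components 1..n are
  X_1..X_n, component n+1 is eps; all i.i.d. N(0, I_d).\<close>

definition data_measure :: "nat \<Rightarrow> nat \<Rightarrow> (nat \<Rightarrow> nat \<Rightarrow> real) measure" where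
  "data_measure n d = PiM {..Suc n} (\<lambda>_. gauss_vec d)"

definition Y0 :: "nat \<Rightarrow> (nat \<Rightarrow> nat \<Rightarrow> real) \<Rightarrow> nat \<Rightarrow> real" where
  "Y0 n \<omega> j = \<omega> 0 j + \<omega> (Suc n) j"

definition sqdist :: "nat \<Rightarrow> (nat \<Rightarrow> real) \<Rightarrow> (nat \<Rightarrow> real) \<Rightarrow> real" where
  "sqdist d u v = (\<Sum>j<d. (u j - v j)\<^sup>2)"

definition weight :: "nat \<Rightarrow> nat \<Rightarrow> (nat \<Rightarrow> nat \<Rightarrow> real) \<Rightarrow> nat \<Rightarrow> real" where
  "weight n d \<omega> i =
     exp (- sqdist d (Y0 n \<omega>) (\<omega> i) / 2) /
     (\<Sum>j=1..n. exp (- sqdist d (Y0 n \<omega>) (\<omega> j) / 2))"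

text \<open>First k coordinates, where the coordinates of R^k are indexed by a finite
  type 'k via a bijection e from 'k onto {0..<CARD('k)}.\<close>
definition proj :: "('k::finite \<Rightarrow> nat) \<Rightarrow> (nat \<Rightarrow> real) \<Rightarrow> real ^ 'k" where
  "proj e x = (\<chi> i. x (e i))"

text \<open>Integral of f against the empirical measure (1/n) sum_l delta of the first k
  coordinates of X*_l, where X*_l = X_{J l}.\<close>
definition emp_int ::
  "nat \<Rightarrow> ('k::finite \<Rightarrow> nat) \<Rightarrow> (real ^ 'k \<Rightarrow> real) \<Rightarrow> (nat \<Rightarrow> nat \<Rightarrow> real) \<Rightarrow> (nat \<Rightarrow> nat) \<Rightarrow> real" where
  "emp_int n e f \<omega> J = (1 / real n) * (\<Sum>l=1..n. f (proj e (\<omega> (J l))))"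

text \<open>Integral of f against N((1/2)(y_01..y_0k), (1/2) I_k).\<close>
definition target_int ::
  "nat \<Rightarrow> ('k::finite \<Rightarrow> nat) \<Rightarrow> (real ^ 'k \<Rightarrow> real) \<Rightarrow> (nat \<Rightarrow> nat \<Rightarrow> real) \<Rightarrow> real" where
  "target_int n e f \<omega> =
     (LINT z|gauss_vec CARD('k). f (\<chi> i. Y0 n \<omega> (e i) / 2 + sqrt (1/2) * z (e i)))"

text \<open>Probability (over data and the conditional i.i.d. resampling of indices
  J_1..J_n from the weights) that the two integrals differ by more than eps.\<close>
definition dev_prob ::
  "nat \<Rightarrow> nat \<Rightarrow> ('k::finite \<Rightarrow> nat) \<Rightarrow> (real ^ 'k \<Rightarrow> real) \<Rightarrow> real \<Rightarrow> real" where
  "dev_prob n d e f eps =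
     (LINT \<omega>|data_measure n d.
        (\<Sum>J \<in> {1..n} \<rightarrow>\<^sub>E {1..n}.
           (\<Prod>l=1..n. weight n d \<omega> (J l)) *
           (if \<bar>emp_int n e f \<omega> J - target_int n e f \<omega>\<bar> > eps then 1 else 0)))"

end

theory Submission
  imports Defs
begin

text \<open>Write \<open>K(y, x) = exp (-\<parallel>y - x\<parallel>\<^sup>2/2)\<close>. For \<open>x \<sim> N(0, I\<^sub>d)\<close> it factorises as \<open>c(y) g\<^sub>y(x)\<close>,
  where \<open>c(y) = E K(y, X)\<close> and \<open>g\<^sub>y\<close> is the density of the posterior \<open>N(y/2, I\<^sub>d/2)\<close> with respect
  to \<open>N(0, I\<^sub>d)\<close>; hence \<open>E [K(y, X) f(X)] = c(y) T(y)\<close>, with \<open>T(y)\<close> the mean of \<open>f\<close> (a function of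
  the first \<open>k\<close> coordinates) under the target law. The resampled empirical mean of \<open>f\<close> is, by
  Chebyshev, close to the self-normalised estimate \<open>A/B\<close>, where \<open>A\<close> and \<open>B\<close> are the sample means
  of \<open>K f\<close> and \<open>K\<close>; and \<open>A/B\<close> is close to \<open>T\<close> once \<open>A\<close> and \<open>B\<close> are within relative error \<open>\<eta>\<close>
  of \<open>c T\<close> and \<open>c\<close>. Chebyshev bounds these relative errors by \<open>E K\<^sup>2 / (n c\<^sup>2) = \<Prod>\<^sub>j \<rho>(y\<^sub>j) / n\<close>
  with \<open>\<rho>(t) = 2/\<surd>3 e\<^bsup>t\<^sup>2/6\<^esup>\<close>, and averaging over \<open>Y\<^sub>0 \<sim> N(0, 2 I\<^sub>d)\<close> gives \<open>E \<rho> = 2\<close> per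
  coordinate. So the deviation probability is \<open>O(2\<^sup>d / n)\<close>, which vanishes when \<open>log n / d \<rightarrow> \<infinity>\<close>.\<close>

section \<open>Elementary estimates\<close>

lemma prod_supported_on_two:
  fixes F :: "'i \<Rightarrow> 'c::comm_monoid_mult"
  assumes "finite I" "i \<in> I" "i' \<in> I" and "\<And>l. l \<in> I \<Longrightarrow> l \<noteq> i \<Longrightarrow> l \<noteq> i' \<Longrightarrow> F l = 1"
  shows "(\<Prod>l\<in>I. F l) = (if i = i' then F i else F i * F i')"
proof -
  have "(\<Prod>l\<in>I. F l) = (\<Prod>l\<in>{i, i'}. F l)"
    using assms by (intro prod.mono_neutral_right) auto
  thus ?thesis by simp
qed

lemma (in prob_space) integrable_sq_bounded:
  fixes h :: "'a \<Rightarrow> real"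
  assumes "h \<in> borel_measurable M" and "\<And>x. x \<in> space M \<Longrightarrow> \<bar>h x\<bar> \<le> B"
  shows "integrable M (\<lambda>x. (h x)\<^sup>2)"
proof (intro integrable_const_bound[where B="B\<^sup>2"] AE_I2)
  fix x assume "x \<in> space M"
  hence "\<bar>h x\<bar>\<^sup>2 \<le> B\<^sup>2" using assms(2) by (intro power_mono) auto
  thus "norm ((h x)\<^sup>2) \<le> B\<^sup>2" by simp
qed (use assms(1) in simp)

lemma (in prob_space) abs_expectation_le:
  fixes h :: "'a \<Rightarrow> real"
  assumes "h \<in> borel_measurable M" and h_bound: "\<And>x. x \<in> space M \<Longrightarrow> \<bar>h x\<bar> \<le> B"
  shows "\<bar>expectation h\<bar> \<le> B"
proof -
  have "integrable M h" using assms by (intro integrable_const_bound[where B=B]) auto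
  hence "\<bar>expectation h\<bar> \<le> expectation (\<lambda>_. B)"
    using h_bound by (intro order.trans[OF integral_abs_bound] integral_mono) auto
  thus ?thesis by (simp add: prob_space)
qed

text \<open>No measurability assumption: a non-integrable function has integral 0.\<close>

lemma integral_le_if_nn_integral_le:
  fixes f :: "'a \<Rightarrow> real"
  assumes f_nonneg: "\<And>x. f x \<ge> 0" and le: "(\<integral>\<^sup>+x. ennreal (f x) \<partial>M) \<le> ennreal c" and c: "c \<ge> 0"
  shows "integral\<^sup>L M f \<le> c"
proof (cases "integrable M f")
  case True
  hence "integral\<^sup>L M f = enn2real (\<integral>\<^sup>+x. ennreal (f x) \<partial>M)"
    using f_nonneg by (intro integral_eq_nn_integral) (auto dest: borel_measurable_integrable)
  also have "\<dots> \<le> c" using le c by (intro enn2real_leI) auto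
  finally show ?thesis .
qed (simp add: not_integrable_integral_eq c)

lemma measurable_vec_lambda:
  fixes g :: "'a \<Rightarrow> 'k::finite \<Rightarrow> real"
  assumes "\<And>i. (\<lambda>x. g x i) \<in> borel_measurable M"
  shows "(\<lambda>x. \<chi> i. g x i) \<in> borel_measurable M"
  using assms by (subst borel_measurable_euclidean_space) (auto simp: Basis_vec_def inner_axis)

lemma density_PiM_prod:
  fixes M :: "'i \<Rightarrow> 'a measure" and g :: "'i \<Rightarrow> 'a \<Rightarrow> ennreal"
  assumes fin: "finite I" and "\<And>i. sigma_finite_measure (M i)"
    and "\<And>i. sigma_finite_measure (density (M i) (g i))"
    and g[measurable]: "\<And>i. i \<in> I \<Longrightarrow> g i \<in> borel_measurable (M i)"
  shows "density (PiM I M) (\<lambda>x. \<Prod>i\<in>I. g i (x i)) = PiM I (\<lambda>i. density (M i) (g i))"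
proof -
  interpret M: product_sigma_finite M using assms(2) by (simp add: product_sigma_finite_def)
  interpret D: product_sigma_finite "\<lambda>i. density (M i) (g i)"
    using assms(3) by (simp add: product_sigma_finite_def)
  have [measurable]: "(\<lambda>x. \<Prod>i\<in>I. g i (x i)) \<in> borel_measurable (PiM I M)"
    using fin by measurable
  show ?thesis
  proof (rule D.PiM_eqI[OF fin])
    show "sets (density (PiM I M) (\<lambda>x. \<Prod>i\<in>I. g i (x i))) = sets (PiM I (\<lambda>i. density (M i) (g i)))"
      unfolding sets_density by (rule sets_PiM_cong) simp_all
  next
    fix A assume "\<And>i. i \<in> I \<Longrightarrow> A i \<in> sets (density (M i) (g i))"
    hence A: "\<And>i. i \<in> I \<Longrightarrow> A i \<in> sets (M i)" by simp
    have indicator_PiE: "indicator (Pi\<^sub>E I A) x = (\<Prod>i\<in>I. indicator (A i) (x i) :: ennreal)"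
      if "x \<in> space (PiM I M)" for x
      using that fin by (auto simp: indicator_def PiE_iff space_PiM intro!: prod_zero)
    have "emeasure (density (PiM I M) (\<lambda>x. \<Prod>i\<in>I. g i (x i))) (Pi\<^sub>E I A)
        = (\<integral>\<^sup>+x. (\<Prod>i\<in>I. g i (x i)) * indicator (Pi\<^sub>E I A) x \<partial>PiM I M)"
      using A fin by (intro emeasure_density) (auto intro!: sets_PiM_I_finite)
    also have "\<dots> = (\<integral>\<^sup>+x. (\<Prod>i\<in>I. g i (x i) * indicator (A i) (x i)) \<partial>PiM I M)"
      by (intro nn_integral_cong) (simp add: indicator_PiE prod.distrib)
    also have "\<dots> = (\<Prod>i\<in>I. \<integral>\<^sup>+y. g i y * indicator (A i) y \<partial>M i)"
      using A fin by (intro M.product_nn_integral_prod) auto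
    also have "\<dots> = (\<Prod>i\<in>I. emeasure (density (M i) (g i)) (A i))"
      using A by (intro prod.cong refl) (simp add: emeasure_density)
    finally show "emeasure (density (PiM I M) (\<lambda>x. \<Prod>i\<in>I. g i (x i))) (Pi\<^sub>E I A)
        = (\<Prod>i\<in>I. emeasure (density (M i) (g i)) (A i))" .
  qed
qed

lemma integral_PiM_restrict:
  fixes F :: "('i \<Rightarrow> 'a) \<Rightarrow> real"
  assumes M: "\<And>i. prob_space (M i)" and fin: "finite K" and KI: "K \<subseteq> I"
    and F[measurable]: "F \<in> borel_measurable (PiM K M)"
  shows "(\<integral>x. F (restrict x K) \<partial>PiM I M) = (\<integral>w. F w \<partial>PiM K M)"
proof -
  interpret P: product_prob_space M I
    using M by (simp add: product_prob_space_def product_prob_space_axioms_def product_sigma_finite_def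
        prob_space_imp_sigma_finite)
  have "(\<integral>w. F w \<partial>PiM K M) = (\<integral>w. F w \<partial>distr (PiM I M) (PiM K M) (\<lambda>x. restrict x K))"
    using fin KI by (simp add: P.distr_PiM_restrict_finite)
  also have "\<dots> = (\<integral>x. F (restrict x K) \<partial>PiM I M)"
    using measurable_restrict_subset[OF KI, of M] F by (rule integral_distr)
  finally show ?thesis ..
qed

lemma integral_PiM_centered_cross:
  fixes M :: "'a measure" and h :: "'a \<Rightarrow> real" and J :: "'i set"
  assumes "prob_space M" and J: "finite J" "i \<in> J" "i' \<in> J" and [measurable]: "h \<in> borel_measurable M"
    and h_bound: "\<And>x. x \<in> space M \<Longrightarrow> \<bar>h x\<bar> \<le> B"
  defines "m \<equiv> integral\<^sup>L M h"
  shows "integrable (PiM J (\<lambda>_. M)) (\<lambda>z. (h (z i) - m) * (h (z i') - m))"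
    and "(\<integral>z. (h (z i) - m) * (h (z i') - m) \<partial>PiM J (\<lambda>_. M)) = (if i = i' then (\<integral>x. (h x - m)\<^sup>2 \<partial>M) else 0)"
proof -
  interpret prob_space M by fact
  interpret product_sigma_finite "\<lambda>_. M"
    by (simp add: product_sigma_finite_def sigma_finite_measure_axioms)
  have int_h: "integrable M h" using h_bound by (intro integrable_const_bound[where B=B]) auto
  have "\<bar>h x - m\<bar> \<le> B + \<bar>m\<bar>" if "x \<in> space M" for x using h_bound[OF that] by linarith
  hence int_sq: "integrable M (\<lambda>x. (h x - m)\<^sup>2)" by (intro integrable_sq_bounded) auto
  text \<open>The cross term is a product over all coordinates with factor 1 outside \<open>{i, i'}\<close>, so it
    factorises under the product measure.\<close>
  define g where "g l x = (if l = i \<and> l = i' then (h x - m)\<^sup>2 else if l = i \<or> l = i' then h x - m else 1)"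
    for l x
  have g_outside: "g l = (\<lambda>_. 1)" if "l \<noteq> i" "l \<noteq> i'" for l
    using that by (simp add: g_def fun_eq_iff)
  have g_inside: "g i = (\<lambda>x. if i = i' then (h x - m)\<^sup>2 else h x - m)"
    "g i' = (\<lambda>x. if i = i' then (h x - m)\<^sup>2 else h x - m)"
    by (auto simp: g_def fun_eq_iff)
  have int_g: "integrable M (g l)" for l
    unfolding g_def using int_h int_sq by (cases "l = i \<and> l = i'"; cases "l = i \<or> l = i'") auto
  have prod_g: "(\<Prod>l\<in>J. g l (z l)) = (h (z i) - m) * (h (z i') - m)" for z
    using prod_supported_on_two[OF J, of "\<lambda>l. g l (z l)"] by (auto simp: g_def power2_eq_square)
  have "integrable (PiM J (\<lambda>_. M)) (\<lambda>z. \<Prod>l\<in>J. g l (z l))"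
    using J int_g by (intro product_integrable_prod) auto
  thus "integrable (PiM J (\<lambda>_. M)) (\<lambda>z. (h (z i) - m) * (h (z i') - m))" by (simp add: prod_g)
  have "(\<integral>z. (\<Prod>l\<in>J. g l (z l)) \<partial>PiM J (\<lambda>_. M)) = (\<Prod>l\<in>J. integral\<^sup>L M (g l))"
    using J int_g by (intro product_integral_prod) auto
  also have "\<dots> = (if i = i' then integral\<^sup>L M (g i) else integral\<^sup>L M (g i) * integral\<^sup>L M (g i'))"
    by (rule prod_supported_on_two[OF J]) (simp add: g_outside prob_space)
  also have "\<dots> = (if i = i' then (\<integral>x. (h x - m)\<^sup>2 \<partial>M) else 0)"
    using int_h by (auto simp: g_inside m_def prob_space)
  finally show "(\<integral>z. (h (z i) - m) * (h (z i') - m) \<partial>PiM J (\<lambda>_. M)) = (if i = i' then (\<integral>x. (h x - m)\<^sup>2 \<partial>M) else 0)"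
    by (simp add: prod_g)
qed

lemma integral_PiM_centered_sum_sq:
  fixes M :: "'a measure" and h :: "'a \<Rightarrow> real" and J :: "'i set"
  assumes M: "prob_space M" and J: "finite J" and h: "h \<in> borel_measurable M"
    and h_bound: "\<And>x. x \<in> space M \<Longrightarrow> \<bar>h x\<bar> \<le> B"
  shows "(\<integral>z. (\<Sum>i\<in>J. h (z i) - integral\<^sup>L M h)\<^sup>2 \<partial>PiM J (\<lambda>_. M))
     = real (card J) * (\<integral>x. (h x - integral\<^sup>L M h)\<^sup>2 \<partial>M)"
proof -
  note cross = integral_PiM_centered_cross[OF M J _ _ h h_bound]
  have "(\<integral>z. (\<Sum>i\<in>J. h (z i) - integral\<^sup>L M h)\<^sup>2 \<partial>PiM J (\<lambda>_. M))
      = (\<Sum>i\<in>J. \<Sum>i'\<in>J. (\<integral>z. (h (z i) - integral\<^sup>L M h) * (h (z i') - integral\<^sup>L M h) \<partial>PiM J (\<lambda>_. M)))"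
    using cross(1) by (simp add: power2_eq_square sum_product Bochner_Integration.integral_sum)
  also have "\<dots> = (\<Sum>i\<in>J. \<Sum>i'\<in>J. if i = i' then (\<integral>x. (h x - integral\<^sup>L M h)\<^sup>2 \<partial>M) else 0)"
    using cross(2) by (intro sum.cong refl) auto
  finally show ?thesis using J by (simp add: sum.delta)
qed

lemma sample_mean_dev_sq_PiM:
  fixes M :: "'a measure" and h :: "'a \<Rightarrow> real" and J :: "'i set"
  assumes M: "prob_space M" and J: "finite J" "J \<noteq> {}" and h_meas[measurable]: "h \<in> borel_measurable M"
    and h_bound: "\<And>x. x \<in> space M \<Longrightarrow> \<bar>h x\<bar> \<le> B"
  defines "n \<equiv> real (card J)" and "m \<equiv> integral\<^sup>L M h"
  shows "integrable (PiM J (\<lambda>_. M)) (\<lambda>z. ((1 / n) * (\<Sum>i\<in>J. h (z i)) - m)\<^sup>2)"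
    and "(\<integral>z. ((1 / n) * (\<Sum>i\<in>J. h (z i)) - m)\<^sup>2 \<partial>PiM J (\<lambda>_. M)) \<le> (1 / n) * (\<integral>x. (h x)\<^sup>2 \<partial>M)"
proof -
  interpret prob_space M by (rule M)
  interpret PP: prob_space "PiM J (\<lambda>_. M)" by (rule prob_space_PiM) (rule M)
  have n_pos: "n > 0" using J by (simp add: n_def card_gt_0_iff)
  have int_h: "integrable M h" using h_bound by (intro integrable_const_bound[where B=B]) auto
  have m_bound: "\<bar>m\<bar> \<le> B" unfolding m_def by (rule abs_expectation_le[OF _ h_bound]) simp
  have "\<bar>(1 / n) * (\<Sum>i\<in>J. h (z i)) - m\<bar> \<le> 2 * B" if "z \<in> space (PiM J (\<lambda>_. M))" for z
  proof -
    have "\<bar>\<Sum>i\<in>J. h (z i)\<bar> \<le> (\<Sum>i\<in>J. B)"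
      using that by (intro order.trans[OF sum_abs] sum_mono h_bound) (auto simp: space_PiM PiE_iff)
    hence "\<bar>(1 / n) * (\<Sum>i\<in>J. h (z i))\<bar> \<le> B" using n_pos by (simp add: n_def abs_mult field_simps)
    thus ?thesis using m_bound by linarith
  qed
  thus "integrable (PiM J (\<lambda>_. M)) (\<lambda>z. ((1 / n) * (\<Sum>i\<in>J. h (z i)) - m)\<^sup>2)"
    using J by (intro PP.integrable_sq_bounded) measurable
  have centered: "(1 / n) * (\<Sum>i\<in>J. h (z i)) - m = (1 / n) * (\<Sum>i\<in>J. h (z i) - m)" for z
    using n_pos by (simp add: sum_subtractf n_def field_simps)
  have "(\<integral>z. ((1 / n) * (\<Sum>i\<in>J. h (z i)) - m)\<^sup>2 \<partial>PiM J (\<lambda>_. M))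
      = (1 / n)\<^sup>2 * (\<integral>z. (\<Sum>i\<in>J. h (z i) - m)\<^sup>2 \<partial>PiM J (\<lambda>_. M))"
    by (simp only: centered power_mult_distrib integral_mult_right_zero)
  also have "\<dots> = (1 / n) * ((\<integral>x. (h x)\<^sup>2 \<partial>M) - m\<^sup>2)"
    using integral_PiM_centered_sum_sq[OF M J(1) h_meas h_bound]
      variance_eq[OF int_h integrable_sq_bounded[OF h_meas h_bound]] n_pos by (simp add: n_def m_def power2_eq_square)
  also have "\<dots> \<le> (1 / n) * (\<integral>x. (h x)\<^sup>2 \<partial>M)" using n_pos by (simp add: divide_right_mono)
  finally show "(\<integral>z. ((1 / n) * (\<Sum>i\<in>J. h (z i)) - m)\<^sup>2 \<partial>PiM J (\<lambda>_. M)) \<le> (1 / n) * (\<integral>x. (h x)\<^sup>2 \<partial>M)" .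
qed

lemma resample_cross_moment:
  fixes w u :: "'a \<Rightarrow> real"
  assumes L: "finite L" "l \<in> L" "l' \<in> L" and A: "finite A"
    and w_sum: "(\<Sum>a\<in>A. w a) = 1" and centered: "(\<Sum>a\<in>A. w a * u a) = 0"
  shows "(\<Sum>J\<in>L \<rightarrow>\<^sub>E A. (\<Prod>q\<in>L. w (J q)) * (u (J l) * u (J l')))
       = (if l = l' then (\<Sum>a\<in>A. w a * (u a)\<^sup>2) else 0)"
proof -
  define H where "H q a = (if q = l \<and> q = l' then (u a)\<^sup>2 else if q = l \<or> q = l' then u a else 1)" for q a
  have "(\<Sum>J\<in>L \<rightarrow>\<^sub>E A. (\<Prod>q\<in>L. w (J q)) * (u (J l) * u (J l')))
      = (\<Sum>J\<in>L \<rightarrow>\<^sub>E A. \<Prod>q\<in>L. w (J q) * H q (J q))"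
  proof (intro sum.cong refl)
    fix J
    have "(\<Prod>q\<in>L. H q (J q)) = u (J l) * u (J l')"
      using prod_supported_on_two[OF L, of "\<lambda>q. H q (J q)"] by (auto simp: H_def power2_eq_square)
    thus "(\<Prod>q\<in>L. w (J q)) * (u (J l) * u (J l')) = (\<Prod>q\<in>L. w (J q) * H q (J q))"
      by (simp add: prod.distrib)
  qed
  also have "\<dots> = (\<Prod>q\<in>L. \<Sum>a\<in>A. w a * H q a)"
    by (rule prod_sum_PiE[symmetric]) (use L A in auto)
  also have "\<dots> = (if l = l' then (\<Sum>a\<in>A. w a * H l a) else (\<Sum>a\<in>A. w a * H l a) * (\<Sum>a\<in>A. w a * H l' a))"
    by (rule prod_supported_on_two[OF L]) (simp add: H_def w_sum)
  also have "\<dots> = (if l = l' then (\<Sum>a\<in>A. w a * (u a)\<^sup>2) else 0)"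
    by (auto simp: H_def centered)
  finally show ?thesis .
qed

lemma weighted_centered_sq_le:
  fixes w v :: "'a \<Rightarrow> real"
  assumes "finite A" and w_nonneg: "\<And>a. a \<in> A \<Longrightarrow> w a \<ge> 0" and w_sum: "(\<Sum>a\<in>A. w a) = 1"
    and v_bound: "\<And>a. a \<in> A \<Longrightarrow> \<bar>v a\<bar> \<le> B"
  shows "(\<Sum>a\<in>A. w a * (v a - (\<Sum>b\<in>A. w b * v b))\<^sup>2) \<le> B\<^sup>2"
proof -
  define S where "S = (\<Sum>b\<in>A. w b * v b)"
  have "(\<Sum>a\<in>A. w a * (v a - S)\<^sup>2) = (\<Sum>a\<in>A. w a * (v a)\<^sup>2 + (-2*S) * (w a * v a) + S\<^sup>2 * w a)"
    by (intro sum.cong refl) (simp add: power2_eq_square algebra_simps)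
  also have "\<dots> = (\<Sum>a\<in>A. w a * (v a)\<^sup>2) + (-2*S) * (\<Sum>a\<in>A. w a * v a) + S\<^sup>2 * (\<Sum>a\<in>A. w a)"
    by (simp only: sum.distrib sum_distrib_left)
  also have "\<dots> = (\<Sum>a\<in>A. w a * (v a)\<^sup>2) - S\<^sup>2"
    unfolding w_sum S_def[symmetric] by (simp add: power2_eq_square)
  also have "\<dots> \<le> (\<Sum>a\<in>A. w a * B\<^sup>2)"
  proof -
    have "(v a)\<^sup>2 \<le> B\<^sup>2" if "a \<in> A" for a
    proof -
      have "\<bar>v a\<bar>\<^sup>2 \<le> B\<^sup>2" using v_bound[OF that] by (intro power_mono) auto
      thus ?thesis by simp
    qed
    hence "(\<Sum>a\<in>A. w a * (v a)\<^sup>2) \<le> (\<Sum>a\<in>A. w a * B\<^sup>2)"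
      by (intro sum_mono mult_left_mono) (auto intro: w_nonneg)
    thus ?thesis using zero_le_power2[of S] by linarith
  qed
  also have "\<dots> = B\<^sup>2" by (simp add: sum_distrib_right[symmetric] w_sum)
  finally show ?thesis unfolding S_def .
qed

lemma resample_mean_dev_sq_le:
  fixes w v :: "'a \<Rightarrow> real" and L :: "'l set"
  assumes L: "finite L" "L \<noteq> {}" and A: "finite A"
    and w_nonneg: "\<And>a. a \<in> A \<Longrightarrow> w a \<ge> 0" and w_sum: "(\<Sum>a\<in>A. w a) = 1"
    and v_bound: "\<And>a. a \<in> A \<Longrightarrow> \<bar>v a\<bar> \<le> B"
  shows "(\<Sum>J\<in>L \<rightarrow>\<^sub>E A. (\<Prod>l\<in>L. w (J l)) *
            ((1 / real (card L)) * (\<Sum>l\<in>L. v (J l)) - (\<Sum>a\<in>A. w a * v a))\<^sup>2)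
         \<le> B\<^sup>2 / real (card L)"
proof -
  define n where "n = real (card L)"
  define S where "S = (\<Sum>a\<in>A. w a * v a)"
  define u where "u a = v a - S" for a
  define V where "V = (\<Sum>a\<in>A. w a * (u a)\<^sup>2)"
  define P where "P J = (\<Prod>l\<in>L. w (J l))" for J :: "'l \<Rightarrow> 'a"
  have n_pos: "n > 0" using L by (simp add: n_def card_gt_0_iff)
  have centered: "(\<Sum>a\<in>A. w a * u a) = 0"
    by (simp add: u_def S_def right_diff_distrib sum_subtractf sum_distrib_right[symmetric] w_sum)
  have expand: "P J * ((1 / n) * (\<Sum>l\<in>L. v (J l)) - S)\<^sup>2
      = (1 / n)\<^sup>2 * (\<Sum>l\<in>L. \<Sum>l'\<in>L. P J * (u (J l) * u (J l')))" for J
  proof -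
    have "(1 / n) * (\<Sum>l\<in>L. v (J l)) - S = (1 / n) * (\<Sum>l\<in>L. u (J l))"
      using n_pos by (simp add: u_def sum_subtractf n_def field_simps)
    thus ?thesis
      by (simp add: power_mult_distrib power2_eq_square sum_product sum_distrib_left mult_ac)
  qed
  have swap: "(\<Sum>J\<in>L \<rightarrow>\<^sub>E A. \<Sum>l\<in>L. \<Sum>l'\<in>L. P J * (u (J l) * u (J l')))
      = (\<Sum>l\<in>L. \<Sum>l'\<in>L. \<Sum>J\<in>L \<rightarrow>\<^sub>E A. P J * (u (J l) * u (J l')))"
    by (subst sum.swap) (intro sum.cong refl sum.swap)
  have "(\<Sum>l\<in>L. \<Sum>l'\<in>L. \<Sum>J\<in>L \<rightarrow>\<^sub>E A. P J * (u (J l) * u (J l')))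
      = (\<Sum>l\<in>L. \<Sum>l'\<in>L. if l = l' then V else 0)"
    unfolding P_def V_def using L A w_sum centered
    by (intro sum.cong refl resample_cross_moment) auto
  also have "\<dots> = n * V" using L(1) by (simp add: n_def)
  finally have moment: "(\<Sum>l\<in>L. \<Sum>l'\<in>L. \<Sum>J\<in>L \<rightarrow>\<^sub>E A. P J * (u (J l) * u (J l'))) = n * V" .
  have "(\<Sum>J\<in>L \<rightarrow>\<^sub>E A. P J * ((1 / n) * (\<Sum>l\<in>L. v (J l)) - S)\<^sup>2)
      = (1 / n)\<^sup>2 * (\<Sum>J\<in>L \<rightarrow>\<^sub>E A. \<Sum>l\<in>L. \<Sum>l'\<in>L. P J * (u (J l) * u (J l')))"
    unfolding expand by (rule sum_distrib_left[symmetric])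
  also have "\<dots> = V / n"
    unfolding swap moment using n_pos by (simp add: power2_eq_square)
  also have "\<dots> \<le> B\<^sup>2 / n"
    unfolding V_def u_def S_def using weighted_centered_sq_le[OF A w_nonneg w_sum v_bound] n_pos
    by (simp add: divide_right_mono)
  finally show ?thesis unfolding n_def S_def P_def .
qed

lemma ratio_deviation_imp_rel_error:
  fixes A B c T Mb \<eta> \<delta> :: real
  assumes c: "c > 0" and B: "B > 0" and T: "\<bar>T\<bar> \<le> Mb" and \<eta>: "0 < \<eta>" "\<eta> \<le> 1/2"
    and \<delta>: "2 * \<eta> * (1 + Mb) \<le> \<delta>" and dev: "\<bar>A / B - T\<bar> > \<delta>"
  shows "1 \<le> ((A - c * T)\<^sup>2 + (B - c)\<^sup>2) / (\<eta>\<^sup>2 * c\<^sup>2)"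
proof (rule ccontr)
  assume "\<not> ?thesis"
  hence small: "(A - c * T)\<^sup>2 + (B - c)\<^sup>2 < (\<eta> * c)\<^sup>2" using c \<eta> by (simp add: field_simps power_mult_distrib)
  have "\<bar>A - c * T\<bar> \<le> \<bar>\<eta> * c\<bar>" "\<bar>B - c\<bar> \<le> \<bar>\<eta> * c\<bar>"
    unfolding abs_le_square_iff using small zero_le_power2[of "B - c"] zero_le_power2[of "A - c * T"]
    by linarith+
  hence num: "\<bar>A - c * T\<bar> \<le> \<eta> * c" and den: "\<bar>B - c\<bar> \<le> \<eta> * c" using c \<eta> by simp_all
  have "\<eta> * c \<le> c / 2" using \<eta> c by simp
  hence B_ge: "B \<ge> c / 2" using den by linarith
  have "\<bar>A / B - T\<bar> = \<bar>(A - c * T) - T * (B - c)\<bar> / B" using B by (simp add: field_simps abs_div)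
  also have "\<dots> \<le> (\<eta> * c + Mb * (\<eta> * c)) / B"
  proof -
    have "\<bar>T * (B - c)\<bar> \<le> Mb * (\<eta> * c)"
      unfolding abs_mult using T den by (intro mult_mono) auto
    hence "\<bar>(A - c * T) - T * (B - c)\<bar> \<le> \<eta> * c + Mb * (\<eta> * c)" using num by linarith
    thus ?thesis using B by (simp add: divide_right_mono)
  qed
  also have "\<dots> \<le> (\<eta> * c + Mb * (\<eta> * c)) / (c / 2)"
    using B B_ge c \<eta> T by (intro divide_left_mono) auto
  also have "\<dots> = 2 * \<eta> * (1 + Mb)" using c by (simp add: field_simps)
  finally show False using \<delta> dev by linarith
qed

lemma indicator_deviation_le:
  fixes x S T eps :: real
  assumes "eps > 0"
  shows "(if \<bar>x - T\<bar> > eps then 1 else 0) \<le> (4 / eps\<^sup>2) * (x - S)\<^sup>2 + (if \<bar>S - T\<bar> > eps / 2 then 1 else 0)"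
proof (cases "\<bar>x - T\<bar> > eps \<and> \<bar>S - T\<bar> \<le> eps / 2")
  case True
  hence "eps / 2 \<le> \<bar>x - S\<bar>" by linarith
  hence "(eps / 2)\<^sup>2 \<le> \<bar>x - S\<bar>\<^sup>2" using assms by (intro power_mono) auto
  hence "1 \<le> (4 / eps\<^sup>2) * (x - S)\<^sup>2" using assms by (simp add: field_simps power2_eq_square)
  thus ?thesis using True by simp
qed auto

lemma resample_deviation_prob_le:
  fixes p v :: "'a \<Rightarrow> real" and I :: "'a set"
  assumes I: "finite I" "I \<noteq> {}" and p: "\<And>i. i \<in> I \<Longrightarrow> p i > 0" and v_bound: "\<And>a. a \<in> I \<Longrightarrow> \<bar>v a\<bar> \<le> Mb"
    and c: "c > 0" and T: "\<bar>T\<bar> \<le> Mb" and \<eta>: "0 < \<eta>" "\<eta> \<le> 1/2"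
    and \<eta>_eps: "2 * \<eta> * (1 + Mb) \<le> eps/2" and eps: "eps > 0"
  defines "n \<equiv> real (card I)"
  shows "(\<Sum>J\<in>I \<rightarrow>\<^sub>E I. (\<Prod>l\<in>I. p (J l) / (\<Sum>j\<in>I. p j)) *
            (if \<bar>(1 / n) * (\<Sum>l\<in>I. v (J l)) - T\<bar> > eps then 1 else 0))
     \<le> 4 * Mb\<^sup>2 / (n * eps\<^sup>2) +
       (((1 / n) * (\<Sum>i\<in>I. p i * v i) - c * T)\<^sup>2 + ((1 / n) * (\<Sum>i\<in>I. p i) - c)\<^sup>2) / (\<eta>\<^sup>2 * c\<^sup>2)"
proof -
  define w where "w a = p a / (\<Sum>j\<in>I. p j)" for a
  define S where "S = (\<Sum>a\<in>I. w a * v a)"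
  define G where "G = (((1 / n) * (\<Sum>i\<in>I. p i * v i) - c * T)\<^sup>2 + ((1 / n) * (\<Sum>i\<in>I. p i) - c)\<^sup>2) / (\<eta>\<^sup>2 * c\<^sup>2)"
  define mean where "mean J = (1 / n) * (\<Sum>l\<in>I. v (J l))" for J
  have n_pos: "n > 0" using I by (simp add: n_def card_gt_0_iff)
  have p_sum_pos: "(\<Sum>j\<in>I. p j) > 0" using I p by (intro sum_pos) auto
  have w_nonneg: "w a \<ge> 0" if "a \<in> I" for a using p[OF that] p_sum_pos by (simp add: w_def)
  have w_sum: "(\<Sum>a\<in>I. w a) = 1" unfolding w_def sum_divide_distrib[symmetric] using p_sum_pos by simp
  have G_nonneg: "G \<ge> 0" unfolding G_def by simp
  have S_ratio: "S = ((1 / n) * (\<Sum>i\<in>I. p i * v i)) / ((1 / n) * (\<Sum>i\<in>I. p i))"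
    unfolding S_def w_def using n_pos by (simp add: sum_divide_distrib[symmetric] field_simps)
  have S_dev: "(if \<bar>S - T\<bar> > eps / 2 then 1 else 0) \<le> G"
    unfolding G_def using G_nonneg S_ratio n_pos p_sum_pos
    by (auto intro!: ratio_deviation_imp_rel_error[OF c _ T \<eta> \<eta>_eps] simp: G_def)
  have total: "(\<Sum>J\<in>I \<rightarrow>\<^sub>E I. (\<Prod>l\<in>I. w (J l))) = 1"
    using prod_sum_PiE[of I "\<lambda>_. I" "\<lambda>_ a. w a"] I w_sum by simp
  have "(\<Sum>J\<in>I \<rightarrow>\<^sub>E I. (\<Prod>l\<in>I. w (J l)) * (if \<bar>mean J - T\<bar> > eps then 1 else 0))
      \<le> (\<Sum>J\<in>I \<rightarrow>\<^sub>E I. (\<Prod>l\<in>I. w (J l)) * ((4 / eps\<^sup>2) * (mean J - S)\<^sup>2 + G))"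
  proof (intro sum_mono mult_left_mono prod_nonneg)
    fix J assume J: "J \<in> I \<rightarrow>\<^sub>E I"
    show "(if \<bar>mean J - T\<bar> > eps then 1 else 0) \<le> (4 / eps\<^sup>2) * (mean J - S)\<^sup>2 + G"
      using indicator_deviation_le[OF eps, of "mean J" T S] S_dev by linarith
    show "w (J l) \<ge> 0" if "l \<in> I" for l using J that by (intro w_nonneg) auto
  qed
  also have "\<dots> = (4 / eps\<^sup>2) * (\<Sum>J\<in>I \<rightarrow>\<^sub>E I. (\<Prod>l\<in>I. w (J l)) * (mean J - S)\<^sup>2) + G"
    by (simp only: distrib_left sum.distrib sum_distrib_right[symmetric] total mult_1)
      (simp add: sum_distrib_left mult_ac)
  also have "\<dots> \<le> (4 / eps\<^sup>2) * (Mb\<^sup>2 / n) + G"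
  proof -
    have "(\<Sum>J\<in>I \<rightarrow>\<^sub>E I. (\<Prod>l\<in>I. w (J l)) * (mean J - S)\<^sup>2) \<le> Mb\<^sup>2 / n"
      using resample_mean_dev_sq_le[OF I I(1) w_nonneg w_sum, of v Mb] v_bound
      by (simp add: mean_def S_def n_def)
    from mult_left_mono[OF this, of "4 / eps\<^sup>2"] show ?thesis by simp
  qed
  finally show ?thesis by (simp add: G_def mean_def w_def mult.commute)
qed

lemma tolerance_bounds:
  fixes eps Mb :: real
  assumes "eps > 0" "Mb \<ge> 0"
  defines "\<eta> \<equiv> min (1/2) (eps / (4 * (1 + Mb)))"
  shows "0 < \<eta>" "\<eta> \<le> 1/2" "2 * \<eta> * (1 + Mb) \<le> eps/2"
proof -
  show "0 < \<eta>" unfolding \<eta>_def using assms by simp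
  show "\<eta> \<le> 1/2" unfolding \<eta>_def by (rule min.cobounded1)
  have "\<eta> * (1 + Mb) \<le> eps / (4 * (1 + Mb)) * (1 + Mb)"
    using assms by (intro mult_right_mono) (simp_all add: \<eta>_def)
  also have "\<dots> = eps / 4" using assms by (simp add: field_simps)
  finally show "2 * \<eta> * (1 + Mb) \<le> eps/2" by simp
qed

lemma pow2_div_tendsto_zero:
  fixes n d :: "nat \<Rightarrow> nat"
  assumes d: "\<And>m. d m \<ge> 1"
    and regime: "filterlim (\<lambda>m. ln (real (n m)) / real (d m)) at_top sequentially"
  shows "(\<lambda>m. 2 ^ d m / real (n m)) \<longlonglongrightarrow> 0"
proof -
  define r where "r m = ln (real (n m)) / real (d m)" for m
  have r_large: "eventually (\<lambda>m. r m \<ge> ln 2 + 1) sequentially"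
    using regime unfolding r_def filterlim_at_top by blast
  have "filterlim (\<lambda>m. r m - ln 2) at_top sequentially"
    using filterlim_tendsto_add_at_top[OF tendsto_const[of "-ln 2"] regime] by (simp add: r_def)
  hence "filterlim (\<lambda>m. -(r m - ln 2)) at_bot sequentially"
    by (simp add: filterlim_uminus_at_bot)
  hence lim: "(\<lambda>m. exp (-(r m - ln 2))) \<longlonglongrightarrow> 0"
    by (rule filterlim_compose[OF exp_at_bot])
  show ?thesis
  proof (rule tendsto_sandwich[OF _ _ tendsto_const lim])
    show "eventually (\<lambda>m. 0 \<le> 2 ^ d m / real (n m)) sequentially" by simp
    show "eventually (\<lambda>m. 2 ^ d m / real (n m) \<le> exp (-(r m - ln 2))) sequentially"
      using r_large
    proof eventually_elim
      case (elim m)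
      have d_ge: "real (d m) \<ge> 1" using d[of m] by simp
      have "r m > 0" using elim ln_gt_zero[of 2] by linarith
      hence "ln (real (n m)) > 0" using d_ge unfolding r_def by (simp add: zero_less_divide_iff)
      hence n_pos: "real (n m) > 0" by (cases "n m = 0") auto
      have ln_n: "ln (real (n m)) = r m * real (d m)" unfolding r_def using d_ge by simp
      have "2 ^ d m / real (n m) = exp (real (d m) * ln 2) / exp (ln (real (n m)))"
        using n_pos by (simp add: exp_of_nat_mult)
      also have "\<dots> = exp (- (real (d m) * (r m - ln 2)))"
        unfolding ln_n by (simp add: exp_diff[symmetric] algebra_simps)
      also have "\<dots> \<le> exp (-(r m - ln 2))"
      proof -
        have "1 * (r m - ln 2) \<le> real (d m) * (r m - ln 2)"
          using elim d_ge by (intro mult_right_mono) auto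
        thus ?thesis by simp
      qed
      finally show ?case .
    qed
  qed
qed

lemma eventually_ge_1_if_ln_ratio_at_top:
  fixes n d :: "nat \<Rightarrow> nat"
  assumes "filterlim (\<lambda>m. ln (real (n m)) / real (d m)) at_top sequentially"
  shows "eventually (\<lambda>m. n m \<ge> 1) sequentially"
proof -
  have "eventually (\<lambda>m. ln (real (n m)) / real (d m) \<ge> 1) sequentially"
    using assms unfolding filterlim_at_top by blast
  thus ?thesis
  proof eventually_elim
    case (elim m)
    show ?case
    proof (rule ccontr)
      assume "\<not> 1 \<le> n m"
      hence "n m = 0" by simp
      thus False using elim by simp
    qed
  qed
qed

section \<open>Gaussian integrals\<close>

lemma nn_integral_exp_neg_quadratic:
  fixes a b c :: real
  assumes a: "a > 0"
  shows "(\<integral>\<^sup>+x. ennreal (exp (-(a*x\<^sup>2 + b*x + c))) \<partial>lborel) = ennreal (sqrt (pi/a) * exp (b\<^sup>2/(4*a) - c))"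
proof -
  define \<sigma> where "\<sigma> = sqrt (1/(2*a))"
  define \<mu> where "\<mu> = -b/(2*a)"
  define K where "K = sqrt (pi/a) * exp (b\<^sup>2/(4*a) - c)"
  have \<sigma>_pos: "\<sigma> > 0" and \<sigma>_sq: "\<sigma>\<^sup>2 = 1/(2*a)"
    using a by (simp_all add: \<sigma>_def)
  have K_nonneg: "K \<ge> 0" using a by (simp add: K_def)
  have completed_square: "exp (-(a*x\<^sup>2 + b*x + c)) = K * normal_density \<mu> \<sigma> x" for x
  proof -
    have "sqrt (pi/a) * (1 / sqrt (2*pi*\<sigma>\<^sup>2)) = 1" using a \<sigma>_sq by simp
    moreover have "-(x - \<mu>)\<^sup>2/(2*\<sigma>\<^sup>2) + (b\<^sup>2/(4*a) - c) = -(a*x\<^sup>2 + b*x + c)"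
      using a unfolding \<sigma>_sq \<mu>_def by (simp add: field_simps power2_eq_square)
    moreover have "K * normal_density \<mu> \<sigma> x
        = (sqrt (pi/a) * (1 / sqrt (2*pi*\<sigma>\<^sup>2))) * exp (-(x - \<mu>)\<^sup>2/(2*\<sigma>\<^sup>2) + (b\<^sup>2/(4*a) - c))"
      unfolding K_def normal_density_def exp_add by (simp add: ac_simps)
    ultimately show ?thesis using a by simp
  qed
  have "(\<integral>\<^sup>+x. ennreal (exp (-(a*x\<^sup>2 + b*x + c))) \<partial>lborel)
      = (\<integral>\<^sup>+x. ennreal K * ennreal (normal_density \<mu> \<sigma> x) \<partial>lborel)"
    by (rule nn_integral_cong) (simp only: completed_square ennreal_mult[OF K_nonneg normal_density_nonneg])
  also have "\<dots> = ennreal K * (\<integral>\<^sup>+x. ennreal (normal_density \<mu> \<sigma> x) \<partial>lborel)"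
    by (rule nn_integral_cmult) simp
  also have "(\<integral>\<^sup>+x. ennreal (normal_density \<mu> \<sigma> x) \<partial>lborel) = 1"
    using \<sigma>_pos by (subst nn_integral_eq_integral) auto
  finally show ?thesis by (simp add: K_def)
qed

lemma prob_space_std_gauss: "prob_space std_gauss"
  unfolding std_gauss_def by (rule prob_space_normal_density) simp

lemma sets_std_gauss [simp, measurable_cong]: "sets std_gauss = sets borel"
  by (simp add: std_gauss_def)

lemma space_std_gauss [simp]: "space std_gauss = UNIV"
  by (simp add: std_gauss_def)

lemma nn_integral_std_gauss:
  assumes [measurable]: "h \<in> borel_measurable borel"
  shows "(\<integral>\<^sup>+x. h x \<partial>std_gauss) = (\<integral>\<^sup>+x. ennreal (std_normal_density x) * h x \<partial>lborel)"
  unfolding std_gauss_def by (subst nn_integral_density) auto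

lemma nn_integral_std_gauss_exp_neg_quadratic:
  fixes a b c :: real
  assumes a: "a + 1/2 > 0"
  shows "(\<integral>\<^sup>+x. ennreal (exp (-(a*x\<^sup>2 + b*x + c))) \<partial>std_gauss)
     = ennreal (sqrt (1/(2*a + 1)) * exp (b\<^sup>2/(4*a + 2) - c))"
proof -
  have density_times: "ennreal (std_normal_density x) * ennreal (exp (-(a*x\<^sup>2 + b*x + c)))
     = ennreal (1 / sqrt (2*pi)) * ennreal (exp (-((a+1/2)*x\<^sup>2 + b*x + c)))" for x
    unfolding std_normal_density_def ennreal_mult'[symmetric, OF exp_ge_zero]
    by (simp add: ennreal_mult[symmetric] mult_exp_exp field_simps)
  have sqrt_factor: "1 / sqrt (2*pi) * sqrt (pi/(a+1/2)) = sqrt (1/(2*a + 1))"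
  proof -
    have "2*a + 1 \<noteq> 0" "pi * (2*a + 1) \<noteq> 0" using a by simp_all
    hence "pi/(a+1/2) / (2*pi) = 1/(2*a + 1)" by (simp add: field_simps)
    thus ?thesis by (metis real_sqrt_divide times_divide_eq_left mult_1 mult.commute)
  qed
  have "(\<integral>\<^sup>+x. ennreal (exp (-(a*x\<^sup>2 + b*x + c))) \<partial>std_gauss)
      = ennreal (1 / sqrt (2*pi)) * (\<integral>\<^sup>+x. ennreal (exp (-((a+1/2)*x\<^sup>2 + b*x + c))) \<partial>lborel)"
    by (subst nn_integral_std_gauss, measurable) (simp only: density_times, rule nn_integral_cmult, measurable)
  also have "\<dots> = ennreal (1 / sqrt (2*pi) * sqrt (pi/(a+1/2)) * exp (b\<^sup>2/(4*(a+1/2)) - c))"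
    unfolding nn_integral_exp_neg_quadratic[OF a] by (subst ennreal_mult'[symmetric]) (simp_all add: mult.assoc)
  also have "4*(a+1/2) = 4*a + 2" by simp
  finally show ?thesis unfolding sqrt_factor .
qed

lemma nn_integral_std_gauss_exp_neg_sq_diff:
  "(\<integral>\<^sup>+x. ennreal (exp (-(t-x)\<^sup>2)) \<partial>std_gauss) = ennreal (exp (-t\<^sup>2/3) / sqrt 3)"
proof -
  have quadratic: "(t-x)\<^sup>2 = 1*x\<^sup>2 + (-2*t)*x + t\<^sup>2" for x by (simp add: power2_eq_square algebra_simps)
  have "(\<integral>\<^sup>+x. ennreal (exp (-(t-x)\<^sup>2)) \<partial>std_gauss)
      = ennreal (sqrt (1/(2*1 + 1)) * exp ((-2*t)\<^sup>2/(4*1 + 2) - t\<^sup>2))"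
    unfolding quadratic by (rule nn_integral_std_gauss_exp_neg_quadratic) simp
  also have "(-2*t)\<^sup>2/(4*1 + 2) - t\<^sup>2 = -t\<^sup>2/3" by (simp add: power2_eq_square field_simps)
  finally show ?thesis by (simp add: real_sqrt_divide)
qed

lemma nn_integral_std_gauss_exp_sq_shift:
  "(\<integral>\<^sup>+x. ennreal (exp ((a+x)\<^sup>2/6)) \<partial>std_gauss) = ennreal (sqrt (3/2) * exp (a\<^sup>2/4))"
proof -
  have quadratic: "(a+x)\<^sup>2/6 = -((-1/6)*x\<^sup>2 + (-a/3)*x + (-a\<^sup>2/6))" for x
    by (simp add: power2_eq_square field_simps)
  have "(\<integral>\<^sup>+x. ennreal (exp ((a+x)\<^sup>2/6)) \<partial>std_gauss)
      = ennreal (sqrt (1/(2*(-1/6) + 1)) * exp ((-a/3)\<^sup>2/(4*(-1/6) + 2) - (-a\<^sup>2/6)))"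
    unfolding quadratic by (rule nn_integral_std_gauss_exp_neg_quadratic) simp
  also have "(-a/3)\<^sup>2/(4*(-1/6) + 2) - (-a\<^sup>2/6) = a\<^sup>2/4"
    by (simp add: power2_eq_square field_simps)
  finally show ?thesis by simp
qed

lemma nn_integral_std_gauss_exp_sq_quarter:
  "(\<integral>\<^sup>+x. ennreal (exp (x\<^sup>2/4)) \<partial>std_gauss) = ennreal (sqrt 2)"
  using nn_integral_std_gauss_exp_neg_quadratic[of "-1/4" 0 0] by simp

lemma prob_space_gauss_vec: "prob_space (gauss_vec D)"
  unfolding gauss_vec_def by (rule prob_space_PiM) (rule prob_space_std_gauss)

lemma sets_gauss_vec [measurable_cong]: "sets (gauss_vec D) = sets (PiM {..<D} (\<lambda>_. borel))"
  unfolding gauss_vec_def by (rule sets_PiM_cong) auto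

lemma product_prob_space_std_gauss: "product_prob_space (\<lambda>_. std_gauss)"
  by (simp add: product_prob_space_def product_prob_space_axioms_def product_sigma_finite_def
      prob_space_std_gauss prob_space_imp_sigma_finite)

lemma product_prob_space_gauss_vec: "product_prob_space (\<lambda>_. gauss_vec D)"
  by (simp add: product_prob_space_def product_prob_space_axioms_def product_sigma_finite_def
      prob_space_gauss_vec prob_space_imp_sigma_finite)

text \<open>Outside the index set both maps below are constant on the extensional product space.\<close>

lemma measurable_gauss_vec_component: "(\<lambda>v. v j) \<in> borel_measurable (gauss_vec D)"
proof (cases "j < D")
  case True
  hence "(\<lambda>v. v j) \<in> measurable (PiM {..<D} (\<lambda>_. std_gauss)) std_gauss"
    by (intro measurable_component_singleton) simp
  thus ?thesis unfolding gauss_vec_def by (simp add: measurable_cong_sets[OF refl sets_std_gauss])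
next
  case False
  have "(\<lambda>v. v j) \<in> borel_measurable (gauss_vec D) \<longleftrightarrow> (\<lambda>v. undefined :: real) \<in> borel_measurable (gauss_vec D)"
    by (rule measurable_cong) (use False in \<open>auto simp: gauss_vec_def space_PiM PiE_def extensional_def\<close>)
  thus ?thesis by simp
qed

lemma measurable_sample_component:
  "(\<lambda>x. x i j) \<in> borel_measurable (PiM I (\<lambda>_. gauss_vec D))"
proof (cases "i \<in> I")
  case True
  hence "(\<lambda>x. x i) \<in> measurable (PiM I (\<lambda>_. gauss_vec D)) (gauss_vec D)"
    by (rule measurable_component_singleton)
  thus ?thesis using measurable_gauss_vec_component by (rule measurable_compose)
next
  case False
  have "(\<lambda>x. x i j) \<in> borel_measurable (PiM I (\<lambda>_. gauss_vec D))
      \<longleftrightarrow> (\<lambda>x. undefined j :: real) \<in> borel_measurable (PiM I (\<lambda>_. gauss_vec D))"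
    by (rule measurable_cong) (use False in \<open>auto simp: space_PiM PiE_def extensional_def\<close>)
  thus ?thesis by simp
qed

lemma measurable_proj:
  fixes e :: "'k::finite \<Rightarrow> nat" and f :: "real^'k \<Rightarrow> real"
  assumes e: "\<And>i. e i \<in> I" and [measurable]: "f \<in> borel_measurable borel"
    and sets_M: "\<And>i. i \<in> I \<Longrightarrow> sets (M i) = sets borel"
  shows "(\<lambda>w. f (proj e w)) \<in> borel_measurable (PiM I M)"
proof -
  have "(\<lambda>w. w (e i)) \<in> borel_measurable (PiM I M)" for i
    using measurable_component_singleton[OF e] measurable_cong_sets[OF refl sets_M[OF e]] by blast
  hence "(\<lambda>w. proj e w) \<in> borel_measurable (PiM I M)"
    unfolding proj_def by (rule measurable_vec_lambda)
  thus ?thesis by measurable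
qed

lemma measurable_proj_sample:
  fixes e :: "'k::finite \<Rightarrow> nat" and f :: "real^'k \<Rightarrow> real"
  assumes [measurable]: "f \<in> borel_measurable borel"
  shows "(\<lambda>\<omega>. f (proj e (\<omega> i))) \<in> borel_measurable (PiM I (\<lambda>_. gauss_vec D))"
proof -
  have "(\<lambda>\<omega>. proj e (\<omega> i)) \<in> borel_measurable (PiM I (\<lambda>_. gauss_vec D))"
    unfolding proj_def by (intro measurable_vec_lambda measurable_sample_component)
  thus ?thesis by measurable
qed

lemma nn_integral_gauss_vec_prod:
  assumes [measurable]: "\<And>j. g j \<in> borel_measurable borel"
  shows "(\<integral>\<^sup>+x. (\<Prod>j<D. g j (x j)) \<partial>gauss_vec D) = (\<Prod>j<D. \<integral>\<^sup>+t. g j t \<partial>std_gauss)"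
proof -
  interpret product_prob_space "\<lambda>_. std_gauss" by (rule product_prob_space_std_gauss)
  show ?thesis
    unfolding gauss_vec_def by (rule product_nn_integral_prod) (auto simp: measurable_cong_sets[OF sets_std_gauss refl])
qed

section \<open>The posterior of a single sample\<close>

text \<open>\<open>kernel_mass t\<close> is the \<open>N(0,1)\<close>-mean of \<open>x \<mapsto> exp (-(t - x)\<^sup>2/2)\<close>; normalising this
  kernel turns \<open>N(0,1)\<close> into the posterior \<open>N(t/2, 1/2)\<close> of \<open>X\<close> given \<open>X + \<epsilon> = t\<close>.\<close>

definition kernel_mass :: "real \<Rightarrow> real" where
  "kernel_mass t = exp (-t\<^sup>2/4) / sqrt 2"

definition posterior_density :: "real \<Rightarrow> real \<Rightarrow> real" where
  "posterior_density t x = exp (-(t-x)\<^sup>2/2) / kernel_mass t"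

definition posterior :: "real \<Rightarrow> real measure" where
  "posterior t = density lborel (normal_density (t/2) (sqrt (1/2)))"

definition gauss_kernel :: "nat \<Rightarrow> (nat \<Rightarrow> real) \<Rightarrow> (nat \<Rightarrow> real) \<Rightarrow> real" where
  "gauss_kernel D y x = exp (- sqdist D y x / 2)"

definition kernel_mean :: "nat \<Rightarrow> (nat \<Rightarrow> real) \<Rightarrow> real" where
  "kernel_mean D y = (\<Prod>j<D. kernel_mass (y j))"

definition gauss_target :: "('k::finite \<Rightarrow> nat) \<Rightarrow> (real^'k \<Rightarrow> real) \<Rightarrow> (nat \<Rightarrow> real) \<Rightarrow> real" where
  "gauss_target e f y = (\<integral>z. f (\<chi> i. y (e i)/2 + sqrt (1/2) * z (e i)) \<partial>gauss_vec CARD('k))"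

lemma kernel_mass_pos: "kernel_mass t > 0"
  by (simp add: kernel_mass_def)

lemma kernel_mass_nonzero [simp]: "kernel_mass t \<noteq> 0"
  using kernel_mass_pos[of t] by simp

lemma kernel_mean_pos: "kernel_mean D y > 0"
  unfolding kernel_mean_def by (intro prod_pos) (simp add: kernel_mass_pos)

lemma gauss_kernel_nonneg: "gauss_kernel D y x \<ge> 0"
  by (simp add: gauss_kernel_def)

lemma gauss_kernel_le_1: "gauss_kernel D y x \<le> 1"
  by (simp add: gauss_kernel_def sqdist_def sum_nonneg)

lemma target_int_eq_gauss_target: "target_int n e f \<omega> = gauss_target e f (Y0 n \<omega>)"
  by (simp add: target_int_def gauss_target_def)

lemma posterior_density_nonneg: "posterior_density t x \<ge> 0"
  using kernel_mass_pos[of t] by (simp add: posterior_density_def)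

lemma measurable_posterior_density [measurable]: "posterior_density t \<in> borel_measurable borel"
  unfolding posterior_density_def by measurable

lemma prob_space_posterior: "prob_space (posterior t)"
  unfolding posterior_def by (rule prob_space_normal_density) simp

lemma sets_posterior [simp, measurable_cong]: "sets (posterior t) = sets borel"
  by (simp add: posterior_def)

lemma density_std_gauss_posterior_density:
  "density std_gauss (\<lambda>x. ennreal (posterior_density t x)) = posterior t"
proof -
  have "std_normal_density x * posterior_density t x = normal_density (t/2) (sqrt (1/2)) x" for x
  proof -
    have exponent: "-x\<^sup>2/2 + (-(t-x)\<^sup>2/2) + t\<^sup>2/4 = -(x - t/2)\<^sup>2/(2*(sqrt (1/2))\<^sup>2)"
      by (simp add: field_simps power2_eq_square)
    have "std_normal_density x * posterior_density t x
        = (1/sqrt(2*pi) * sqrt 2) * exp (-x\<^sup>2/2 + (-(t-x)\<^sup>2/2) + t\<^sup>2/4)"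
      unfolding std_normal_density_def posterior_density_def kernel_mass_def exp_add exp_minus
      by (simp add: field_simps exp_minus)
    also have "1/sqrt(2*pi) * sqrt 2 = 1 / sqrt (2*pi*(sqrt (1/2))\<^sup>2)"
      by (simp add: real_sqrt_mult field_simps)
    finally show ?thesis unfolding exponent normal_density_def by simp
  qed
  thus ?thesis
    unfolding std_gauss_def posterior_def
    by (subst density_density_eq) (auto intro!: density_cong simp: ennreal_mult'[symmetric])
qed

lemma distr_std_gauss_affine: "distr std_gauss borel (\<lambda>z. t/2 + sqrt (1/2) * z) = posterior t"
proof -
  interpret prob_space std_gauss by (rule prob_space_std_gauss)
  have "distributed std_gauss lborel (\<lambda>x. x) (normal_density 0 1)"
    unfolding distributed_def std_gauss_def by (auto simp: distr_id2)
  hence "distributed std_gauss lborel (\<lambda>x. t/2 + sqrt (1/2) * x)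
      (normal_density (t/2 + sqrt (1/2) * 0) (\<bar>sqrt (1/2)\<bar> * 1))"
    by (rule normal_density_affine) auto
  hence "distr std_gauss lborel (\<lambda>x. t/2 + sqrt (1/2) * x) = posterior t"
    unfolding posterior_def by (subst distributed_distr_eq_density) simp_all
  moreover have "distr std_gauss borel (\<lambda>x. t/2 + sqrt (1/2) * x) = distr std_gauss lborel (\<lambda>x. t/2 + sqrt (1/2) * x)"
    by (rule distr_cong) simp_all
  ultimately show ?thesis by simp
qed

lemma density_gauss_vec_posterior:
  "density (gauss_vec D) (\<lambda>x. ennreal (\<Prod>j<D. posterior_density (y j) (x j)))
     = PiM {..<D} (\<lambda>j. posterior (y j))"
proof -
  have "density (gauss_vec D) (\<lambda>x. ennreal (\<Prod>j<D. posterior_density (y j) (x j)))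
      = density (PiM {..<D} (\<lambda>_. std_gauss)) (\<lambda>x. \<Prod>j<D. ennreal (posterior_density (y j) (x j)))"
    unfolding gauss_vec_def by (simp add: prod_ennreal posterior_density_nonneg)
  also have "\<dots> = PiM {..<D} (\<lambda>j. density std_gauss (\<lambda>x. ennreal (posterior_density (y j) x)))"
    by (rule density_PiM_prod)
      (simp_all add: density_std_gauss_posterior_density prob_space_imp_sigma_finite
        prob_space_std_gauss prob_space_posterior measurable_cong_sets[OF sets_std_gauss refl])
  finally show ?thesis by (simp add: density_std_gauss_posterior_density)
qed

lemma PiM_posterior_eq_distr_gauss_vec:
  "PiM {..<K} (\<lambda>j. posterior (y j)) =
     distr (gauss_vec K) (PiM {..<K} (\<lambda>_. borel)) (\<lambda>z. \<lambda>j\<in>{..<K}. y j/2 + sqrt (1/2) * z j)"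
    (is "_ = distr _ _ ?A")
proof -
  interpret Post: product_sigma_finite "\<lambda>j. posterior (y j)"
    by (simp add: product_sigma_finite_def prob_space_imp_sigma_finite prob_space_posterior)
  interpret G: product_prob_space "\<lambda>_. std_gauss" by (rule product_prob_space_std_gauss)
  have A_meas: "?A \<in> measurable (gauss_vec K) (PiM {..<K} (\<lambda>_. borel))"
    unfolding gauss_vec_def by measurable
  have affine_meas: "(\<lambda>z::real. a + b * z) \<in> borel_measurable std_gauss" for a b
    unfolding measurable_cong_sets[OF sets_std_gauss refl] by measurable
  show ?thesis
  proof (rule Post.PiM_eqI[symmetric])
    show "sets (distr (gauss_vec K) (PiM {..<K} (\<lambda>_. borel)) ?A) = sets (PiM {..<K} (\<lambda>j. posterior (y j)))"
      unfolding sets_distr by (rule sets_PiM_cong) simp_all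
  next
    fix X assume "\<And>j. j \<in> {..<K} \<Longrightarrow> X j \<in> sets (posterior (y j))"
    hence X: "\<And>j. j < K \<Longrightarrow> X j \<in> sets borel" by simp
    have pre_sets: "(\<lambda>z. y j/2 + sqrt (1/2) * z) -` X j \<in> sets std_gauss" if "j < K" for j
      using measurable_sets[OF affine_meas X[OF that]] by simp
    have preimage: "?A -` Pi\<^sub>E {..<K} X \<inter> space (gauss_vec K)
       = Pi\<^sub>E {..<K} (\<lambda>j. (\<lambda>z. y j/2 + sqrt (1/2) * z) -` X j)"
      unfolding gauss_vec_def by (auto simp: space_PiM PiE_iff)
    have "emeasure (distr (gauss_vec K) (PiM {..<K} (\<lambda>_. borel)) ?A) (Pi\<^sub>E {..<K} X)
        = emeasure (gauss_vec K) (Pi\<^sub>E {..<K} (\<lambda>j. (\<lambda>z. y j/2 + sqrt (1/2) * z) -` X j))"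
      using X by (subst emeasure_distr[OF A_meas]) (auto simp: preimage intro!: sets_PiM_I_finite)
    also have "\<dots> = (\<Prod>j<K. emeasure std_gauss ((\<lambda>z. y j/2 + sqrt (1/2) * z) -` X j))"
      unfolding gauss_vec_def using pre_sets by (subst G.emeasure_PiM) auto
    also have "\<dots> = (\<Prod>j<K. emeasure (posterior (y j)) (X j))"
    proof (intro prod.cong refl)
      fix j assume "j \<in> {..<K}"
      thus "emeasure std_gauss ((\<lambda>z. y j/2 + sqrt (1/2) * z) -` X j) = emeasure (posterior (y j)) (X j)"
        unfolding distr_std_gauss_affine[symmetric, of "y j"]
        by (subst emeasure_distr[OF affine_meas]) (use X in auto)
    qed
    finally show "emeasure (distr (gauss_vec K) (PiM {..<K} (\<lambda>_. borel)) ?A) (Pi\<^sub>E {..<K} X)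
        = (\<Prod>j<K. emeasure (posterior (y j)) (X j))" .
  qed simp
qed

lemma gauss_kernel_eq_prod:
  "gauss_kernel D y x = kernel_mean D y * (\<Prod>j<D. posterior_density (y j) (x j))"
proof -
  have "gauss_kernel D y x = exp (\<Sum>j<D. -(y j - x j)\<^sup>2/2)"
    unfolding gauss_kernel_def sqdist_def by (simp add: sum_negf sum_divide_distrib)
  also have "\<dots> = (\<Prod>j<D. exp (-(y j - x j)\<^sup>2/2))" by (rule exp_sum) simp
  also have "\<dots> = (\<Prod>j<D. kernel_mass (y j) * posterior_density (y j) (x j))"
    by (intro prod.cong refl) (simp add: posterior_density_def)
  finally show ?thesis by (simp add: kernel_mean_def prod.distrib)
qed

lemma integral_gauss_vec_kernel:
  fixes e :: "'k::finite \<Rightarrow> nat" and f :: "real^'k \<Rightarrow> real"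
  assumes e: "bij_betw e UNIV {..<CARD('k)}" and KD: "CARD('k) \<le> D"
    and f[measurable]: "f \<in> borel_measurable borel"
  shows "(\<integral>x. gauss_kernel D y x * f (proj e x) \<partial>gauss_vec D) = kernel_mean D y * gauss_target e f y"
proof -
  define K where "K = CARD('k)"
  have eK: "e i \<in> {..<K}" for i using bij_betw_apply[OF e] unfolding K_def by auto
  have eD: "e i \<in> {..<D}" for i using eK[of i] KD unfolding K_def by simp
  define g where "g x = (\<Prod>j<D. posterior_density (y j) (x j))" for x :: "nat \<Rightarrow> real"
  have g_nonneg: "g x \<ge> 0" for x unfolding g_def by (intro prod_nonneg) (simp add: posterior_density_nonneg)
  have [measurable]: "g \<in> borel_measurable (gauss_vec D)"
    unfolding g_def gauss_vec_def by measurable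
  have [measurable]: "(\<lambda>x. f (proj e x)) \<in> borel_measurable (gauss_vec D)"
    unfolding gauss_vec_def using eD by (intro measurable_proj) auto
  have "(\<integral>x. gauss_kernel D y x * f (proj e x) \<partial>gauss_vec D) = kernel_mean D y * (\<integral>x. g x * f (proj e x) \<partial>gauss_vec D)"
    by (simp add: gauss_kernel_eq_prod g_def mult.assoc)
  also have "(\<integral>x. g x * f (proj e x) \<partial>gauss_vec D) = (\<integral>x. f (proj e x) \<partial>density (gauss_vec D) g)"
    using g_nonneg by (subst integral_density) auto
  also have "density (gauss_vec D) g = PiM {..<D} (\<lambda>j. posterior (y j))"
    unfolding g_def by (rule density_gauss_vec_posterior)
  also have "(\<integral>x. f (proj e x) \<partial>PiM {..<D} (\<lambda>j. posterior (y j)))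
      = (\<integral>x. f (proj e (restrict x {..<K})) \<partial>PiM {..<D} (\<lambda>j. posterior (y j)))"
    using eK by (intro Bochner_Integration.integral_cong refl) (simp add: proj_def)
  also have "\<dots> = (\<integral>w. f (proj e w) \<partial>PiM {..<K} (\<lambda>j. posterior (y j)))"
    using KD eK unfolding K_def
    by (intro integral_PiM_restrict measurable_proj) (auto simp: prob_space_posterior)
  also have "\<dots> = (\<integral>z. f (proj e (\<lambda>j\<in>{..<K}. y j/2 + sqrt (1/2) * z j)) \<partial>gauss_vec K)"
    unfolding PiM_posterior_eq_distr_gauss_vec
  proof (rule integral_distr)
    show "(\<lambda>z. \<lambda>j\<in>{..<K}. y j/2 + sqrt (1/2) * z j) \<in> measurable (gauss_vec K) (PiM {..<K} (\<lambda>_. borel))"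
      unfolding gauss_vec_def by measurable
    show "(\<lambda>w. f (proj e w)) \<in> borel_measurable (PiM {..<K} (\<lambda>_. borel))"
      using eK by (intro measurable_proj) auto
  qed
  also have "\<dots> = gauss_target e f y"
    unfolding gauss_target_def K_def using eK
    by (intro Bochner_Integration.integral_cong refl) (simp add: proj_def K_def)
  finally show ?thesis .
qed

definition kernel_moment_ratio :: "real \<Rightarrow> real" where
  "kernel_moment_ratio t = 2 / sqrt 3 * exp (t\<^sup>2/6)"

lemma kernel_moment_ratio_nonneg: "kernel_moment_ratio t \<ge> 0"
  by (simp add: kernel_moment_ratio_def)

lemma measurable_kernel_moment_ratio [measurable]: "kernel_moment_ratio \<in> borel_measurable borel"
  unfolding kernel_moment_ratio_def by measurable

lemma integral_std_gauss_exp_neg_sq_diff: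
  "(\<integral>x. exp (-(t-x)\<^sup>2) \<partial>std_gauss) = kernel_mass t ^ 2 * kernel_moment_ratio t"
proof -
  have "(\<integral>x. exp (-(t-x)\<^sup>2) \<partial>std_gauss) = enn2real (\<integral>\<^sup>+x. ennreal (exp (-(t-x)\<^sup>2)) \<partial>std_gauss)"
    by (rule integral_eq_nn_integral) auto
  also have "\<dots> = exp (-t\<^sup>2/3) / sqrt 3"
    by (simp add: nn_integral_std_gauss_exp_neg_sq_diff)
  also have "exp (-t\<^sup>2/3) = exp (-t\<^sup>2/2) * exp (t\<^sup>2/6)"
    by (simp add: mult_exp_exp)
  also have "exp (-t\<^sup>2/2) = 2 * kernel_mass t ^ 2"
    by (simp add: kernel_mass_def power_divide power2_eq_square mult_exp_exp)
  finally show ?thesis by (simp add: kernel_moment_ratio_def)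
qed

lemma integral_gauss_vec_kernel_sq:
  "(\<integral>x. (gauss_kernel D y x)\<^sup>2 \<partial>gauss_vec D) = (kernel_mean D y)\<^sup>2 * (\<Prod>j<D. kernel_moment_ratio (y j))"
proof -
  interpret product_prob_space "\<lambda>_. std_gauss" by (rule product_prob_space_std_gauss)
  have gauss_kernel_sq: "(gauss_kernel D y x)\<^sup>2 = (\<Prod>j<D. exp (-(y j - x j)\<^sup>2))" for x
  proof -
    have "(gauss_kernel D y x)\<^sup>2 = exp (\<Sum>j<D. -(y j - x j)\<^sup>2)"
      by (simp add: gauss_kernel_def sqdist_def power2_eq_square mult_exp_exp sum_negf)
    also have "\<dots> = (\<Prod>j<D. exp (-(y j - x j)\<^sup>2))" by (rule exp_sum) simp
    finally show ?thesis .
  qed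
  have "integrable std_gauss (\<lambda>x. exp (-(t-x)\<^sup>2))" for t
    by (intro M.integrable_const_bound[where B=1]) auto
  hence "(\<integral>x. (gauss_kernel D y x)\<^sup>2 \<partial>gauss_vec D) = (\<Prod>j<D. (\<integral>x. exp (-(y j - x)\<^sup>2) \<partial>std_gauss))"
    unfolding gauss_vec_def gauss_kernel_sq by (subst product_integral_prod) auto
  also have "\<dots> = (kernel_mean D y)\<^sup>2 * (\<Prod>j<D. kernel_moment_ratio (y j))"
    by (simp add: integral_std_gauss_exp_neg_sq_diff kernel_mean_def prod.distrib power_mult_distrib
        prod_power_distrib)
  finally show ?thesis .
qed

section \<open>The deviation probability\<close>

lemma gauss_target_abs_le:
  fixes e :: "'k::finite \<Rightarrow> nat"
  assumes f[measurable]: "f \<in> borel_measurable borel" and f_bound: "\<And>x. \<bar>f x\<bar> \<le> Mb"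
  shows "\<bar>gauss_target e f y\<bar> \<le> Mb"
proof -
  interpret prob_space "gauss_vec CARD('k)" by (rule prob_space_gauss_vec)
  have Mb: "Mb \<ge> 0" using f_bound[of 0] by linarith
  have [measurable]: "(\<lambda>z. z j) \<in> borel_measurable (gauss_vec CARD('k))" for j
    by (rule measurable_gauss_vec_component)
  have "(\<lambda>z. \<chi> i. y (e i) / 2 + sqrt (1/2) * z (e i)) \<in> borel_measurable (gauss_vec CARD('k))"
    by (intro measurable_vec_lambda) measurable
  hence [measurable]: "(\<lambda>z. f (\<chi> i. y (e i) / 2 + sqrt (1/2) * z (e i))) \<in> borel_measurable (gauss_vec CARD('k))"
    by measurable
  have "\<bar>gauss_target e f y\<bar> \<le> (\<integral>z. \<bar>f (\<chi> i. y (e i) / 2 + sqrt (1/2) * z (e i))\<bar> \<partial>gauss_vec CARD('k))"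
    unfolding gauss_target_def by (rule integral_abs_bound)
  also have "\<dots> \<le> (\<integral>z. Mb \<partial>gauss_vec CARD('k))"
    using f_bound by (intro integral_mono integrable_const_bound[where B=Mb]) (auto intro: Mb)
  finally show ?thesis by (simp add: prob_space)
qed

lemma sample_mean_kernel_dev_sq:
  fixes e :: "'k::finite \<Rightarrow> nat" and g :: "real^'k \<Rightarrow> real" and y :: "nat \<Rightarrow> real"
  assumes e: "bij_betw e UNIV {..<CARD('k)}" and KD: "CARD('k) \<le> D" and N: "N \<ge> 1"
    and g[measurable]: "g \<in> borel_measurable borel" and g_bound: "\<And>x. \<bar>g x\<bar> \<le> Mb"
  defines "dev z \<equiv> ((1 / real N) * (\<Sum>i=1..N. gauss_kernel D y (z i) * g (proj e (z i)))
                       - kernel_mean D y * gauss_target e g y)\<^sup>2"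
  shows "integrable (PiM {1..N} (\<lambda>_. gauss_vec D)) dev"
    and "(\<integral>z. dev z \<partial>PiM {1..N} (\<lambda>_. gauss_vec D))
           \<le> Mb\<^sup>2 * (kernel_mean D y)\<^sup>2 * (\<Prod>j<D. kernel_moment_ratio (y j)) / real N"
proof -
  interpret G: prob_space "gauss_vec D" by (rule prob_space_gauss_vec)
  define h where "h x = gauss_kernel D y x * g (proj e x)" for x
  have eD: "e i \<in> {..<D}" for i using bij_betw_apply[OF e, of i] KD by (auto intro: less_le_trans)
  have [measurable]: "(\<lambda>x. g (proj e x)) \<in> borel_measurable (gauss_vec D)"
    unfolding gauss_vec_def using eD by (intro measurable_proj) auto
  have kernel_meas [measurable]: "gauss_kernel D y \<in> borel_measurable (gauss_vec D)"
    unfolding gauss_kernel_def[abs_def] sqdist_def gauss_vec_def by measurable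
  have h_meas: "h \<in> borel_measurable (gauss_vec D)" unfolding h_def by measurable
  have h_bound: "\<bar>h x\<bar> \<le> Mb * gauss_kernel D y x" for x
  proof -
    have "gauss_kernel D y x * \<bar>g (proj e x)\<bar> \<le> gauss_kernel D y x * Mb"
      by (intro mult_left_mono g_bound gauss_kernel_nonneg)
    thus ?thesis by (simp add: h_def abs_mult gauss_kernel_nonneg mult.commute)
  qed
  hence h_bound': "\<bar>h x\<bar> \<le> Mb" for x
    using gauss_kernel_le_1[of D y x] g_bound[of 0] by (smt (verit) mult_left_le)
  have mean: "integral\<^sup>L (gauss_vec D) h = kernel_mean D y * gauss_target e g y"
    unfolding h_def by (rule integral_gauss_vec_kernel[OF e KD g])
  have J: "finite {1..N}" "{1..N} \<noteq> {}" using N by auto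
  note sample = sample_mean_dev_sq_PiM[OF prob_space_gauss_vec J h_meas h_bound', unfolded card_atLeastAtMost mean]
  show "integrable (PiM {1..N} (\<lambda>_. gauss_vec D)) dev"
    using sample(1) unfolding dev_def h_def by simp
  have "(\<integral>x. (h x)\<^sup>2 \<partial>gauss_vec D) \<le> (\<integral>x. Mb\<^sup>2 * (gauss_kernel D y x)\<^sup>2 \<partial>gauss_vec D)"
  proof (rule integral_mono)
    show "(h x)\<^sup>2 \<le> Mb\<^sup>2 * (gauss_kernel D y x)\<^sup>2" for x
      using h_bound[of x] abs_le_square_iff[of "h x" "Mb * gauss_kernel D y x"] g_bound[of 0]
      by (simp add: power_mult_distrib gauss_kernel_nonneg)
    show "integrable (gauss_vec D) (\<lambda>x. Mb\<^sup>2 * (gauss_kernel D y x)\<^sup>2)"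
      using gauss_kernel_nonneg gauss_kernel_le_1 by (intro integrable_mult_right G.integrable_sq_bounded) auto
  qed (rule G.integrable_sq_bounded[OF h_meas h_bound'])
  also have "\<dots> = Mb\<^sup>2 * (kernel_mean D y)\<^sup>2 * (\<Prod>j<D. kernel_moment_ratio (y j))"
    by (simp add: integral_gauss_vec_kernel_sq)
  finally have "(1 / real N) * (\<integral>x. (h x)\<^sup>2 \<partial>gauss_vec D)
      \<le> Mb\<^sup>2 * (kernel_mean D y)\<^sup>2 * (\<Prod>j<D. kernel_moment_ratio (y j)) / real N"
    by (simp add: divide_right_mono)
  with sample(2) show "(\<integral>z. dev z \<partial>PiM {1..N} (\<lambda>_. gauss_vec D))
      \<le> Mb\<^sup>2 * (kernel_mean D y)\<^sup>2 * (\<Prod>j<D. kernel_moment_ratio (y j)) / real N"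
    unfolding dev_def h_def by simp
qed

text \<open>Squared relative errors of the numerator and the denominator of the self-normalised
  importance-sampling estimate of the target mean, with tolerance \<open>\<eta>\<close>.\<close>

definition ratio_error ::
  "nat \<Rightarrow> nat \<Rightarrow> ('k::finite \<Rightarrow> nat) \<Rightarrow> (real^'k \<Rightarrow> real) \<Rightarrow> real \<Rightarrow> (nat \<Rightarrow> real) \<Rightarrow> (nat \<Rightarrow> nat \<Rightarrow> real) \<Rightarrow> real"
where
  "ratio_error D N e f \<eta> y z =
     (((1 / real N) * (\<Sum>i=1..N. gauss_kernel D y (z i) * f (proj e (z i))) - kernel_mean D y * gauss_target e f y)\<^sup>2
      + ((1 / real N) * (\<Sum>i=1..N. gauss_kernel D y (z i)) - kernel_mean D y)\<^sup>2)
     / (\<eta>\<^sup>2 * (kernel_mean D y)\<^sup>2)"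

lemma ratio_error_nonneg: "ratio_error D N e f \<eta> y z \<ge> 0"
  by (simp add: ratio_error_def)

lemma gauss_target_const: "gauss_target e (\<lambda>_. c) y = c"
proof -
  interpret prob_space "gauss_vec CARD('k)" by (rule prob_space_gauss_vec)
  show ?thesis by (simp add: gauss_target_def prob_space)
qed

lemma nn_integral_ratio_error_le:
  fixes e :: "'k::finite \<Rightarrow> nat" and f :: "real^'k \<Rightarrow> real" and y :: "nat \<Rightarrow> real"
  assumes e: "bij_betw e UNIV {..<CARD('k)}" and KD: "CARD('k) \<le> D" and N: "N \<ge> 1"
    and f: "f \<in> borel_measurable borel" and f_bound: "\<And>x. \<bar>f x\<bar> \<le> Mb" and \<eta>: "\<eta> > 0"
  shows "(\<integral>\<^sup>+z. ennreal (ratio_error D N e f \<eta> y z) \<partial>PiM {1..N} (\<lambda>_. gauss_vec D))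
     \<le> ennreal ((Mb\<^sup>2 + 1) / (real N * \<eta>\<^sup>2) * (\<Prod>j<D. kernel_moment_ratio (y j)))"
proof -
  define c where "c = kernel_mean D y"
  define R where "R = (\<Prod>j<D. kernel_moment_ratio (y j))"
  note num = sample_mean_kernel_dev_sq[OF e KD N f f_bound, of y]
  note den = sample_mean_kernel_dev_sq[OF e KD N borel_measurable_const, of 1 1 y]
  have c_pos: "c > 0" unfolding c_def by (rule kernel_mean_pos)
  let ?P = "PiM {1..N} (\<lambda>_. gauss_vec D)"
  let ?num = "\<lambda>z. ((1 / real N) * (\<Sum>i=1..N. gauss_kernel D y (z i) * f (proj e (z i))) - c * gauss_target e f y)\<^sup>2"
  let ?den = "\<lambda>z. ((1 / real N) * (\<Sum>i=1..N. gauss_kernel D y (z i)) - c)\<^sup>2"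
  have ratio_error_eq: "ratio_error D N e f \<eta> y z = (?num z + ?den z) / (\<eta>\<^sup>2 * c\<^sup>2)" for z
    by (simp add: ratio_error_def c_def)
  have int_num: "integrable ?P ?num" and int_den: "integrable ?P ?den"
    using num(1) den(1) by (simp_all add: c_def gauss_target_const)
  have "(\<integral>z. ?num z \<partial>?P) + (\<integral>z. ?den z \<partial>?P) \<le> Mb\<^sup>2 * c\<^sup>2 * R / real N + c\<^sup>2 * R / real N"
    using num(2) den(2) by (intro add_mono) (simp_all add: c_def R_def gauss_target_const)
  hence "(\<integral>z. ratio_error D N e f \<eta> y z \<partial>?P) \<le> (Mb\<^sup>2 * c\<^sup>2 * R / real N + c\<^sup>2 * R / real N) / (\<eta>\<^sup>2 * c\<^sup>2)"
    unfolding ratio_error_eq using int_num int_den \<eta> c_pos by (simp add: divide_right_mono)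
  also have "\<dots> = (Mb\<^sup>2 + 1) / (real N * \<eta>\<^sup>2) * R"
    using c_pos \<eta> N by (simp add: field_simps)
  finally have "(\<integral>z. ratio_error D N e f \<eta> y z \<partial>?P) \<le> (Mb\<^sup>2 + 1) / (real N * \<eta>\<^sup>2) * R" .
  moreover have "(\<integral>\<^sup>+z. ennreal (ratio_error D N e f \<eta> y z) \<partial>?P) = ennreal (\<integral>z. ratio_error D N e f \<eta> y z \<partial>?P)"
    unfolding ratio_error_eq using int_num int_den
    by (intro nn_integral_eq_integral) (auto intro!: integrable_divide)
  ultimately show ?thesis unfolding R_def by (simp add: ennreal_leI)
qed

lemma nn_integral_kernel_moment_ratio_shift:
  "(\<integral>\<^sup>+t. ennreal (kernel_moment_ratio (t + s)) \<partial>std_gauss) = ennreal (sqrt 2 * exp (s\<^sup>2/4))"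
proof -
  have "(\<integral>\<^sup>+t. ennreal (kernel_moment_ratio (t + s)) \<partial>std_gauss)
      = ennreal (2 / sqrt 3) * (\<integral>\<^sup>+t. ennreal (exp ((s + t)\<^sup>2/6)) \<partial>std_gauss)"
    by (subst nn_integral_cmult[symmetric])
       (auto simp: kernel_moment_ratio_def ennreal_mult'[symmetric] add.commute)
  also have "\<dots> = ennreal (2 / sqrt 3 * sqrt (3/2) * exp (s\<^sup>2/4))"
    by (simp add: nn_integral_std_gauss_exp_sq_shift ennreal_mult'[symmetric] mult.assoc)
  also have "2 / sqrt 3 * sqrt (3/2) = sqrt 2"
    by (simp add: real_sqrt_divide field_simps)
  finally show ?thesis .
qed

lemma nn_integral_kernel_moment_ratio_pair:
  assumes "a \<noteq> b"
  shows "(\<integral>\<^sup>+x. ennreal (\<Prod>j<D. kernel_moment_ratio (x a j + x b j)) \<partial>PiM {a, b} (\<lambda>_. gauss_vec D)) = 2 ^ D"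
proof -
  interpret PG: product_prob_space "\<lambda>_. gauss_vec D" by (rule product_prob_space_gauss_vec)
  have inner: "(\<integral>\<^sup>+u. ennreal (\<Prod>j<D. kernel_moment_ratio (u j + v j)) \<partial>gauss_vec D)
      = (\<Prod>j<D. ennreal (sqrt 2 * exp ((v j)\<^sup>2/4)))" for v :: "nat \<Rightarrow> real"
    using nn_integral_gauss_vec_prod[of "\<lambda>j t. ennreal (kernel_moment_ratio (t + v j))" D]
    by (simp add: prod_ennreal[symmetric] kernel_moment_ratio_nonneg nn_integral_kernel_moment_ratio_shift)
  have outer: "(\<integral>\<^sup>+v. (\<Prod>j<D. ennreal (sqrt 2 * exp ((v j)\<^sup>2/4))) \<partial>gauss_vec D) = 2 ^ D"
  proof -
    have "(\<integral>\<^sup>+t. ennreal (sqrt 2 * exp (t\<^sup>2/4)) \<partial>std_gauss)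
        = ennreal (sqrt 2) * (\<integral>\<^sup>+t. ennreal (exp (t\<^sup>2/4)) \<partial>std_gauss)"
      by (simp add: ennreal_mult) (rule nn_integral_cmult, measurable)
    also have "\<dots> = ennreal (sqrt 2) * ennreal (sqrt 2)"
      by (simp only: nn_integral_std_gauss_exp_sq_quarter)
    also have "\<dots> = 2" by (simp add: ennreal_mult[symmetric])
    finally show ?thesis
      using nn_integral_gauss_vec_prod[of "\<lambda>_ t. ennreal (sqrt 2 * exp (t\<^sup>2/4))" D] by simp
  qed
  have [measurable]: "(\<lambda>x. x i j) \<in> borel_measurable (PiM {a, b} (\<lambda>_. gauss_vec D))" for i j
    by (rule measurable_sample_component)
  have [measurable]: "(\<lambda>v. v j) \<in> borel_measurable (gauss_vec D)" for j
    by (rule measurable_gauss_vec_component)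
  have "(\<integral>\<^sup>+x. ennreal (\<Prod>j<D. kernel_moment_ratio (x a j + x b j)) \<partial>PiM (insert a {b}) (\<lambda>_. gauss_vec D))
      = (\<integral>\<^sup>+x. (\<integral>\<^sup>+u. ennreal (\<Prod>j<D. kernel_moment_ratio (u j + x b j)) \<partial>gauss_vec D) \<partial>PiM {b} (\<lambda>_. gauss_vec D))"
    using assms by (subst PG.product_nn_integral_insert) auto
  also have "\<dots> = (\<integral>\<^sup>+v. (\<Prod>j<D. ennreal (sqrt 2 * exp ((v j)\<^sup>2/4))) \<partial>gauss_vec D)"
    unfolding inner by (rule PG.product_nn_integral_singleton) measurable
  finally show ?thesis unfolding outer by simp
qed

lemma measurable_gauss_target:
  fixes e :: "'k::finite \<Rightarrow> nat" and f :: "real^'k \<Rightarrow> real"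
  assumes [measurable]: "f \<in> borel_measurable borel" and Y: "\<And>j. (\<lambda>\<omega>. Y \<omega> j) \<in> borel_measurable M"
  shows "(\<lambda>\<omega>. gauss_target e f (Y \<omega>)) \<in> borel_measurable M"
proof -
  interpret GK: prob_space "gauss_vec CARD('k)" by (rule prob_space_gauss_vec)
  have [measurable]: "(\<lambda>z. z j) \<in> borel_measurable (gauss_vec CARD('k))" for j
    by (rule measurable_gauss_vec_component)
  have [measurable]: "(\<lambda>\<omega>. Y \<omega> j) \<in> borel_measurable M" for j by (rule Y)
  have "(\<lambda>p. \<chi> i. Y (fst p) (e i) / 2 + sqrt (1/2) * snd p (e i)) \<in> borel_measurable (M \<Otimes>\<^sub>M gauss_vec CARD('k))"
    by (intro measurable_vec_lambda) measurable
  hence "(\<lambda>(\<omega>, z). f (\<chi> i. Y \<omega> (e i) / 2 + sqrt (1/2) * z (e i))) \<in> borel_measurable (M \<Otimes>\<^sub>M gauss_vec CARD('k))"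
    by (simp add: case_prod_beta measurable_compose[OF _ assms(1)])
  from GK.borel_measurable_lebesgue_integral[OF this] show ?thesis
    unfolding gauss_target_def by simp
qed

lemma measurable_ratio_error:
  fixes e :: "'k::finite \<Rightarrow> nat" and f :: "real^'k \<Rightarrow> real"
  assumes [measurable]: "f \<in> borel_measurable borel"
  shows "(\<lambda>\<omega>. ratio_error D N e f \<eta> (Y0 N \<omega>) \<omega>) \<in> borel_measurable (PiM I (\<lambda>_. gauss_vec D))"
proof -
  have [measurable]: "(\<lambda>\<omega>. \<omega> i j) \<in> borel_measurable (PiM I (\<lambda>_. gauss_vec D))" for i j
    by (rule measurable_sample_component)
  have [measurable]: "(\<lambda>\<omega>. f (proj e (\<omega> i))) \<in> borel_measurable (PiM I (\<lambda>_. gauss_vec D))" for i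
    by (rule measurable_proj_sample) measurable
  have [measurable]: "(\<lambda>\<omega>. Y0 N \<omega> j) \<in> borel_measurable (PiM I (\<lambda>_. gauss_vec D))" for j
    unfolding Y0_def by measurable
  have [measurable]: "(\<lambda>\<omega>. gauss_target e f (Y0 N \<omega>)) \<in> borel_measurable (PiM I (\<lambda>_. gauss_vec D))"
    by (rule measurable_gauss_target) simp_all
  show ?thesis
    unfolding ratio_error_def gauss_kernel_def sqdist_def kernel_mean_def kernel_mass_def
    by measurable
qed

lemma ratio_error_cong:
  assumes "\<And>i. i \<in> {1..N} \<Longrightarrow> z i = z' i"
  shows "ratio_error D N e f \<eta> y z = ratio_error D N e f \<eta> y z'"
proof -
  have "(\<Sum>i=1..N. F (z i)) = (\<Sum>i=1..N. F (z' i))" for F :: "(nat \<Rightarrow> real) \<Rightarrow> real"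
    using assms by (intro sum.cong) auto
  from this[of "\<lambda>v. gauss_kernel D y v * f (proj e v)"] this[of "gauss_kernel D y"] show ?thesis
    unfolding ratio_error_def by simp
qed

lemma nn_integral_data_ratio_error_le:
  fixes e :: "'k::finite \<Rightarrow> nat" and f :: "real^'k \<Rightarrow> real"
  assumes e: "bij_betw e UNIV {..<CARD('k)}" and KD: "CARD('k) \<le> D" and N: "N \<ge> 1"
    and f: "f \<in> borel_measurable borel" and f_bound: "\<And>x. \<bar>f x\<bar> \<le> Mb" and \<eta>: "\<eta> > 0"
  shows "(\<integral>\<^sup>+\<omega>. ennreal (ratio_error D N e f \<eta> (Y0 N \<omega>) \<omega>) \<partial>data_measure N D)
     \<le> ennreal ((Mb\<^sup>2 + 1) / (real N * \<eta>\<^sup>2) * 2 ^ D)"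
proof -
  interpret PG: product_prob_space "\<lambda>_. gauss_vec D" by (rule product_prob_space_gauss_vec)
  define C where "C = (Mb\<^sup>2 + 1) / (real N * \<eta>\<^sup>2)"
  have C: "C \<ge> 0" by (simp add: C_def)
  define I J where "I = {0, Suc N}" and "J = {1..N}"
  have U: "{..Suc N} = I \<union> J" and disj: "I \<inter> J = {}" by (auto simp: I_def J_def)
  have "(\<integral>\<^sup>+\<omega>. ennreal (ratio_error D N e f \<eta> (Y0 N \<omega>) \<omega>) \<partial>data_measure N D)
      = (\<integral>\<^sup>+x. \<integral>\<^sup>+z. ennreal (ratio_error D N e f \<eta> (Y0 N (merge I J (x, z))) (merge I J (x, z)))
           \<partial>PiM J (\<lambda>_. gauss_vec D) \<partial>PiM I (\<lambda>_. gauss_vec D))"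
    unfolding data_measure_def U using measurable_ratio_error[OF f]
    by (intro PG.product_nn_integral_fold[OF disj]) (auto simp: I_def J_def)
  also have "\<dots> \<le> (\<integral>\<^sup>+x. ennreal C * ennreal (\<Prod>j<D. kernel_moment_ratio (x 0 j + x (Suc N) j))
                     \<partial>PiM I (\<lambda>_. gauss_vec D))"
  proof (rule nn_integral_mono)
    fix x :: "nat \<Rightarrow> nat \<Rightarrow> real"
    define y where "y j = x 0 j + x (Suc N) j" for j
    have "ratio_error D N e f \<eta> (Y0 N (merge I J (x, z))) (merge I J (x, z)) = ratio_error D N e f \<eta> y z" for z
    proof -
      have "Y0 N (merge I J (x, z)) = y" by (simp add: Y0_def merge_def y_def I_def fun_eq_iff)
      thus ?thesis by (auto simp: merge_def I_def J_def intro!: ratio_error_cong)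
    qed
    hence "(\<integral>\<^sup>+z. ennreal (ratio_error D N e f \<eta> (Y0 N (merge I J (x, z))) (merge I J (x, z))) \<partial>PiM J (\<lambda>_. gauss_vec D))
        \<le> ennreal (C * (\<Prod>j<D. kernel_moment_ratio (y j)))"
      unfolding J_def C_def using nn_integral_ratio_error_le[OF e KD N f f_bound \<eta>] by simp
    thus "(\<integral>\<^sup>+z. ennreal (ratio_error D N e f \<eta> (Y0 N (merge I J (x, z))) (merge I J (x, z))) \<partial>PiM J (\<lambda>_. gauss_vec D))
        \<le> ennreal C * ennreal (\<Prod>j<D. kernel_moment_ratio (x 0 j + x (Suc N) j))"
      by (simp add: y_def ennreal_mult'[OF C])
  qed
  also have "\<dots> = ennreal C * 2 ^ D"
  proof -
    have [measurable]: "(\<lambda>x. x i j) \<in> borel_measurable (PiM {0, Suc N} (\<lambda>_. gauss_vec D))" for i j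
      by (rule measurable_sample_component)
    show ?thesis unfolding I_def
      by (subst nn_integral_cmult) (measurable, simp add: nn_integral_kernel_moment_ratio_pair)
  qed
  also have "ennreal C * 2 ^ D = ennreal (C * 2 ^ D)"
    using C by (simp add: ennreal_mult' ennreal_power[symmetric])
  finally show ?thesis unfolding C_def .
qed

definition resample_dev ::
  "nat \<Rightarrow> nat \<Rightarrow> ('k::finite \<Rightarrow> nat) \<Rightarrow> (real^'k \<Rightarrow> real) \<Rightarrow> real \<Rightarrow> (nat \<Rightarrow> nat \<Rightarrow> real) \<Rightarrow> real"
where
  "resample_dev N D e f eps \<omega> = (\<Sum>J\<in>{1..N} \<rightarrow>\<^sub>E {1..N}. (\<Prod>l=1..N. weight N D \<omega> (J l)) *
     (if \<bar>emp_int N e f \<omega> J - target_int N e f \<omega>\<bar> > eps then 1 else 0))"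

lemma dev_prob_eq_integral: "dev_prob N D e f eps = (\<integral>\<omega>. resample_dev N D e f eps \<omega> \<partial>data_measure N D)"
  unfolding dev_prob_def resample_dev_def ..

lemma resample_dev_nonneg: "resample_dev N D e f eps \<omega> \<ge> 0"
  unfolding resample_dev_def weight_def
  by (intro sum_nonneg mult_nonneg_nonneg prod_nonneg divide_nonneg_nonneg) (auto intro: sum_nonneg)

lemma resample_dev_le_ratio_error:
  fixes e :: "'k::finite \<Rightarrow> nat" and f :: "real^'k \<Rightarrow> real"
  assumes N: "N \<ge> 1" and f: "f \<in> borel_measurable borel" and f_bound: "\<And>x. \<bar>f x\<bar> \<le> Mb"
    and \<eta>: "0 < \<eta>" "\<eta> \<le> 1/2" and \<eta>_eps: "2 * \<eta> * (1 + Mb) \<le> eps/2" and eps: "eps > 0"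
  shows "resample_dev N D e f eps \<omega> \<le> 4 * Mb\<^sup>2 / (real N * eps\<^sup>2) + ratio_error D N e f \<eta> (Y0 N \<omega>) \<omega>"
proof -
  have "weight N D \<omega> i = gauss_kernel D (Y0 N \<omega>) (\<omega> i) / (\<Sum>j=1..N. gauss_kernel D (Y0 N \<omega>) (\<omega> j))" for i
    by (simp add: weight_def gauss_kernel_def)
  moreover have "emp_int N e f \<omega> J = (1 / real (card {1..N})) * (\<Sum>l=1..N. f (proj e (\<omega> (J l))))" for J
    by (simp add: emp_int_def)
  ultimately show ?thesis unfolding resample_dev_def
    using resample_deviation_prob_le[of "{1..N}" "\<lambda>i. gauss_kernel D (Y0 N \<omega>) (\<omega> i)"
        "\<lambda>i. f (proj e (\<omega> i))" Mb "kernel_mean D (Y0 N \<omega>)" "gauss_target e f (Y0 N \<omega>)" \<eta> eps]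
      N f_bound \<eta> \<eta>_eps eps gauss_target_abs_le[OF f f_bound] kernel_mean_pos
    by (simp add: target_int_eq_gauss_target ratio_error_def gauss_kernel_def)
qed

lemma dev_prob_le:
  fixes e :: "'k::finite \<Rightarrow> nat" and f :: "real^'k \<Rightarrow> real"
  assumes e: "bij_betw e UNIV {..<CARD('k)}" and KD: "CARD('k) \<le> D" and N: "N \<ge> 1"
    and f: "f \<in> borel_measurable borel" and f_bound: "\<And>x. \<bar>f x\<bar> \<le> Mb" and eps: "eps > 0"
  defines "\<eta> \<equiv> min (1/2) (eps / (4 * (1 + Mb)))"
  shows "dev_prob N D e f eps \<le> (4 * Mb\<^sup>2 / eps\<^sup>2 + (Mb\<^sup>2 + 1) / \<eta>\<^sup>2) * (2 ^ D / real N)"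
proof -
  have Mb: "Mb \<ge> 0" using f_bound[of 0] by linarith
  note \<eta> = tolerance_bounds[OF eps Mb, folded \<eta>_def]
  define K0 where "K0 = 4 * Mb\<^sup>2 / (real N * eps\<^sup>2)"
  define C where "C = (Mb\<^sup>2 + 1) / (real N * \<eta>\<^sup>2) * 2 ^ D"
  have K0: "K0 \<ge> 0" and C: "C \<ge> 0" by (simp_all add: K0_def C_def)
  interpret P: prob_space "data_measure N D"
    unfolding data_measure_def by (rule prob_space_PiM) (rule prob_space_gauss_vec)
  have "(\<integral>\<^sup>+\<omega>. ennreal (resample_dev N D e f eps \<omega>) \<partial>data_measure N D)
      \<le> (\<integral>\<^sup>+\<omega>. ennreal K0 + ennreal (ratio_error D N e f \<eta> (Y0 N \<omega>) \<omega>) \<partial>data_measure N D)"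
    using resample_dev_le_ratio_error[OF N f f_bound \<eta> eps] K0
    by (intro nn_integral_mono) (simp add: K0_def ennreal_plus[symmetric] ratio_error_nonneg del: ennreal_plus)
  also have "\<dots> = ennreal K0 + (\<integral>\<^sup>+\<omega>. ennreal (ratio_error D N e f \<eta> (Y0 N \<omega>) \<omega>) \<partial>data_measure N D)"
    using measurable_ratio_error[OF f]
    by (subst nn_integral_add) (auto simp: data_measure_def P.emeasure_space_1[unfolded data_measure_def])
  also have "\<dots> \<le> ennreal K0 + ennreal C"
    unfolding C_def using nn_integral_data_ratio_error_le[OF e KD N f f_bound \<eta>(1)]
    by (intro add_left_mono) (simp add: mult.assoc)
  finally have "dev_prob N D e f eps \<le> K0 + C"
    unfolding dev_prob_eq_integral using K0 C resample_dev_nonneg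
    by (intro integral_le_if_nn_integral_le) (simp_all add: ennreal_plus[symmetric] del: ennreal_plus)
  also have "K0 \<le> 4 * Mb\<^sup>2 / eps\<^sup>2 * (2 ^ D / real N)"
    using mult_left_mono[of 1 "2 ^ D" K0] K0 by (simp add: K0_def mult.commute)
  finally show ?thesis by (simp add: C_def algebra_simps)
qed

theorem corollary4p2:
  fixes n d :: "nat \<Rightarrow> nat" and e :: "'k::finite \<Rightarrow> nat"
  assumes e_bij: "bij_betw e UNIV {..<CARD('k)}"
    and dim: "\<And>m. CARD('k) \<le> d m"
    and regime: "filterlim (\<lambda>m. ln (real (n m)) / real (d m)) at_top sequentially"
  shows "\<forall>f :: real ^ 'k \<Rightarrow> real. continuous_on UNIV f \<and> bounded (range f) \<longrightarrow>
           (\<forall>eps > 0. (\<lambda>m. dev_prob (n m) (d m) e f eps) \<longlonglongrightarrow> 0)"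
proof (intro allI impI)
  fix f :: "real ^ 'k \<Rightarrow> real" and eps :: real
  assume f: "continuous_on UNIV f \<and> bounded (range f)" and eps: "eps > 0"
  have f_meas: "f \<in> borel_measurable borel" using f by (intro borel_measurable_continuous_onI) auto
  obtain Mb where Mb: "\<And>x. \<bar>f x\<bar> \<le> Mb" using f unfolding bounded_iff by auto
  define K where "K = 4 * Mb\<^sup>2 / eps\<^sup>2 + (Mb\<^sup>2 + 1) / (min (1/2) (eps / (4 * (1 + Mb))))\<^sup>2"
  have "0 < CARD('k)" by simp
  hence d: "d m \<ge> 1" for m using dim[of m] by linarith
  have lim: "(\<lambda>m. K * (2 ^ d m / real (n m))) \<longlonglongrightarrow> 0"
    using tendsto_mult_right_zero[OF pow2_div_tendsto_zero[OF d regime]] by simp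
  have bound: "eventually (\<lambda>m. dev_prob (n m) (d m) e f eps \<le> K * (2 ^ d m / real (n m))) sequentially"
    using eventually_ge_1_if_ln_ratio_at_top[OF regime]
  proof eventually_elim
    case (elim m)
    show ?case unfolding K_def by (rule dev_prob_le[OF e_bij dim elim f_meas Mb eps])
  qed
  show "(\<lambda>m. dev_prob (n m) (d m) e f eps) \<longlonglongrightarrow> 0"
    unfolding dev_prob_eq_integral
    by (intro tendsto_sandwich[OF _ bound[unfolded dev_prob_eq_integral] tendsto_const lim]
        always_eventually allI integral_nonneg_AE AE_I2 resample_dev_nonneg)
qed

end
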